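(* Let $p$ be a prime number and let $1\to F\to H\to\bar H\to1$ be an exact sequence of finite groups such that $\bar H$ is abelian and generated by $r$ elements. Suppose that the $p$-Sylow subgroup $F_p$ of $F$ is normal in $F$ and $F_p\cong(\mathbb{Z}/p\mathbb{Z})^m$ for some non-negative integer $m$. Suppose further that $|F|\le B\cdot|F_p|^e$ for some positive constants $B$ and $e$, and that $F$ is generated by $F_p$ together with $s$ additional elements. Then $H$ contains a characteristic abelian subgroup of order coprime to $p$ and index at most $B^{r+s+1}\cdot|H_p|^{e(r+s+1)+r+1}$, where $H_p$ is a $p$-Sylow subgroup of $H$. *)

theory Defs
  imports "HOL-Algebra.Algebra"
begin

definition sylow_subgroup :: "('a, 'b) monoid_scheme \<Rightarrow> nat \<Rightarrow> 'a set \<Rightarrow> bool" where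
  "sylow_subgroup G p P \<longleftrightarrow> subgroup P G \<and> (\<exists>k. card P = p ^ k) \<and> \<not> p dvd (order G div card P)"

definition characteristic_subgroup :: "('a, 'b) monoid_scheme \<Rightarrow> 'a set \<Rightarrow> bool" where
  "characteristic_subgroup G A \<longleftrightarrow> subgroup A G \<and> (\<forall>\<phi> \<in> iso G G. \<phi> ` A = A)"

end

theory Submission
  imports Defs
begin

(* Let K be the kernel of \<pi> and P = i ` Fp, the elements of order dividing p in K; P is an
   elementary abelian normal subgroup of H.  Conjugation by the p-regular part of x \<in> H is an
   automorphism of P of order prime to p, and such an automorphism has order at most |P|; hence
   a power x [^] (p ^ a * k) with k \<le> |P| centralizes P.  Adjoining these powers of r lifts of
   generators of Hbar to K C(P) gives a subgroup R of p-power index with |R| \<le> |P|^r |K| |C(P)|.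
   Since commutators with a fixed element lie in K and H is generated by P and r + s further
   elements, |C(P)| \<le> |K|^(r+s) |Z(H)|.  Finally Z(H) is the product of its p-part, which lies
   in R, and its p'-part A, which is characteristic, abelian and of order prime to p.  Hence
   [H : A] is at most a p-power dividing |H| times |P|^r |K|^(r+s+1), and |P|, |K| and that
   p-power are bounded in terms of |Hp|. *)

section \<open>Indices, Sylow subgroups and centralizers\<close>

lemma subgroup_nat_pow_closed:
  assumes "subgroup S G" "x \<in> S" shows "x [^]\<^bsub>G\<^esub> (k::nat) \<in> S"
  using assms by (induction k) (auto simp: subgroup.one_closed subgroup.m_closed)

lemma (in group_hom) subgroup_vimage:
  assumes "subgroup S H" shows "subgroup {x \<in> carrier G. h x \<in> S} G"
  using assms
  by (auto intro!: subgroup.intro simp: subgroup.one_closed subgroup.m_closed subgroup.m_inv_closed)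

lemma (in group) card_subgroup_dvd:
  assumes "subgroup T G" "subgroup S G" "T \<subseteq> S" shows "card T dvd card S"
proof -
  interpret S: group "G\<lparr>carrier := S\<rparr>" using subgroup.subgroup_is_group[OF assms(2) is_group] .
  have "subgroup T (G\<lparr>carrier := S\<rparr>)" using subgroup_incl assms by blast
  from S.lagrange[OF this] show ?thesis by (simp add: order_def) (metis dvd_triv_right)
qed

lemma (in group) mem_subgroup_if_coprime_pows:
  fixes a b :: nat
  assumes T: "subgroup T G" and x: "x \<in> carrier G" and ab: "coprime a b"
    and xa: "x [^] a \<in> T" and xb: "x [^] b \<in> T"
  shows "x \<in> T"
proof (cases "a = 0")
  case True then have "b = 1" using ab by simp
  then show ?thesis using xb x by simp
next
  case False
  obtain u w where "a * u = b * w + gcd a b" using bezout_nat[OF False] by blast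
  then have uw: "a * u = Suc (b * w)" using ab by simp
  have "x [^] (a * u) \<in> T" "x [^] (b * w) \<in> T"
    using subgroup_nat_pow_closed[OF T xa, of u] subgroup_nat_pow_closed[OF T xb, of w]
    by (simp_all add: nat_pow_pow x)
  moreover have "x = inv (x [^] (b * w)) \<otimes> x [^] (a * u)"
    using uw x by (simp add: m_assoc[symmetric])
  ultimately show ?thesis using T subgroup.m_closed subgroup.m_inv_closed by metis
qed

text \<open>A Sylow \<open>l\<close>-subgroup of \<open>S\<close> would lie in \<open>T\<close>, since its elements have \<open>l\<close>-power order.\<close>
lemma (in group) prime_not_dvd_index_if_coprime_pows:
  assumes fin: "finite (carrier G)" and l: "Factorial_Ring.prime l"
    and T: "subgroup T G" and S: "subgroup S G" and TS: "T \<subseteq> S"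
    and pows: "\<forall>x\<in>S. \<exists>m::nat. coprime m l \<and> x [^] m \<in> T"
  shows "\<not> l dvd (card S div card T)"
proof
  assume dvd: "l dvd card S div card T"
  interpret S: group "G\<lparr>carrier := S\<rparr>" using subgroup.subgroup_is_group[OF S is_group] .
  have finS: "finite S" using fin S subgroup.subset finite_subset by blast
  have cS: "card S \<noteq> 0" using finS subgroup.one_closed[OF S] by auto
  define v where "v = multiplicity l (card S)"
  obtain m where "card S = l ^ v * m" using multiplicity_dvd[of l "card S"] v_def
    by (auto elim: dvdE)
  then have "order (G\<lparr>carrier := S\<rparr>) = l ^ v * m" by (simp add: order_def)
  from sylow_thm[OF l S.is_group this] finS obtain L
    where L: "subgroup L (G\<lparr>carrier := S\<rparr>)" "card L = l ^ v" by auto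
  have LG: "subgroup L G" using incl_subgroup[OF S L(1)] .
  have "L \<subseteq> T"
  proof
    fix x assume x: "x \<in> L"
    interpret L: group "G\<lparr>carrier := L\<rparr>" using subgroup.subgroup_is_group[OF LG is_group] .
    have "x [^]\<^bsub>G\<lparr>carrier := L\<rparr>\<^esub> order (G\<lparr>carrier := L\<rparr>) = \<one>"
      using L.pow_order_eq_1 x by simp
    then have "x [^] (l ^ v) = \<one>" using L(2) by (simp add: order_def nat_pow_consistent[symmetric])
    moreover obtain m' where "coprime m' l" "x [^] m' \<in> T"
      using pows x subgroup.subset[OF L(1)] by auto
    ultimately show "x \<in> T"
      using mem_subgroup_if_coprime_pows[OF T, of x m' "l ^ v"] subgroup.one_closed[OF T] x LG
        subgroup.subset
      by fastforce
  qed
  then have "l ^ v dvd card T" using card_subgroup_dvd[OF LG T] L(2) by simp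
  moreover have "card S = (card S div card T) * card T" using card_subgroup_dvd[OF T S TS] by simp
  ultimately have "l ^ Suc v dvd card S" using dvd by (metis mult_dvd_mono power_Suc)
  then have "Suc v \<le> v"
    using multiplicity_geI[of "card S" l "Suc v"] cS prime_gt_1_nat[OF l] v_def by simp
  then show False by simp
qed

lemma eq_prime_power_if_prime_divisors_eq:
  fixes n p :: nat
  assumes "n > 0" "Factorial_Ring.prime p" "\<And>l. Factorial_Ring.prime l \<Longrightarrow> l dvd n \<Longrightarrow> l = p"
  shows "n = p ^ multiplicity p n"
proof -
  obtain y where y: "n = p ^ multiplicity p n * y" "\<not> p dvd y"
    using multiplicity_decompose'[of n p] assms(1) prime_gt_1_nat[OF assms(2)] by auto
  have "y = 1"
  proof (rule ccontr)
    assume "y \<noteq> 1"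
    then obtain l where "Factorial_Ring.prime l" "l dvd y" using prime_factor_nat by blast
    then show False using assms(3) y by (metis dvd_mult)
  qed
  then show ?thesis using y(1) by simp
qed

lemma (in group) index_prime_power_if_prime_power_pows:
  assumes fin: "finite (carrier G)" and p: "Factorial_Ring.prime p"
    and T: "subgroup T G" and S: "subgroup S G" and TS: "T \<subseteq> S"
    and pows: "\<forall>x\<in>S. \<exists>j. x [^] (p ^ j) \<in> T"
  shows "\<exists>t. card S = p ^ t * card T"
proof -
  have dvd: "card T dvd card S" using card_subgroup_dvd[OF T S TS] .
  have "card S > 0" using fin S subgroup.subset finite_subset subgroup.one_closed
    by (metis card_gt_0_iff empty_iff)
  then have pos: "card S div card T > 0" using dvd by (metis dvd_div_eq_0_iff gr0I)
  have "l = p" if l: "Factorial_Ring.prime l" "l dvd card S div card T" for l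
  proof (rule ccontr)
    assume "l \<noteq> p"
    then have "coprime (p ^ j) l" for j using primes_coprime[OF p l(1)] by simp
    then have "\<forall>x\<in>S. \<exists>m::nat. coprime m l \<and> x [^] m \<in> T" using pows by blast
    then show False using prime_not_dvd_index_if_coprime_pows[OF fin l(1) T S TS] l(2) by blast
  qed
  then have "card S div card T = p ^ multiplicity p (card S div card T)"
    using eq_prime_power_if_prime_divisors_eq[OF pos p] by blast
  then show ?thesis using dvd by (metis dvd_div_mult_self)
qed

lemma (in group) prime_power_dvd_order_le_sylow:
  assumes fin: "finite (carrier G)" and p: "Factorial_Ring.prime p" and Hp: "sylow_subgroup G p Hp"
    and dvd: "p ^ t dvd order G"
  shows "p ^ t \<le> card Hp"
proof -
  have sHp: "subgroup Hp G" and ndvd: "\<not> p dvd order G div card Hp"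
    using Hp by (auto simp: sylow_subgroup_def)
  have "card Hp dvd order G"
    using card_subgroup_dvd[OF sHp subgroup_self subgroup.subset[OF sHp]] by (simp add: order_def)
  then have split: "order G = card Hp * (order G div card Hp)" by simp
  have "coprime (p ^ t) (order G div card Hp)" using ndvd p by (simp add: prime_imp_coprime)
  then have "p ^ t dvd card Hp" using dvd split by (metis coprime_dvd_mult_left_iff)
  moreover have "card Hp > 0"
    using subgroup.finite_imp_card_positive[OF sHp fin] .
  ultimately show ?thesis by (simp add: dvd_imp_le)
qed

lemma (in group) mem_normal_sylow_if_pow_eq_one:
  assumes fin: "finite (carrier G)" and p: "Factorial_Ring.prime p" and N: "Fp \<lhd> G"
    and ndvd: "\<not> p dvd (order G div card Fp)"
    and x: "x \<in> carrier G" and xp: "x [^] p = \<one>"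
  shows "x \<in> Fp"
proof -
  interpret normal Fp G by (rule N)
  interpret Q: group "G Mod Fp" by (rule factorgroup_is_group)
  have sF: "subgroup Fp G" by (rule subgroup_axioms)
  define l where "l = card (rcosets Fp)"
  have "l * card Fp = order G" using lagrange[OF sF] l_def by simp
  moreover have "card Fp > 0" using finite_imp_card_positive[OF fin] .
  ultimately have l_eq: "l = order G div card Fp"
    by (metis nonzero_mult_div_cancel_right less_not_refl2)
  have "order (G Mod Fp) = l" by (simp add: order_def FactGroup_def l_def)
  then have "(Fp #> x) [^]\<^bsub>G Mod Fp\<^esub> l = \<one>\<^bsub>G Mod Fp\<^esub>"
    using Q.pow_order_eq_1 x by (simp add: carrier_FactGroup)
  then have "Fp #> (x [^] l) = Fp" using FactGroup_pow[OF x, of l] by simp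
  then have "x [^] l \<in> Fp" using rcos_self[OF _ sF, of "x [^] l"] x by simp
  moreover have "coprime l p" using ndvd l_eq p by (simp add: prime_imp_coprime coprime_commute)
  moreover have "x [^] p \<in> Fp" using xp subgroup.one_closed[OF sF] by simp
  ultimately show ?thesis using mem_subgroup_if_coprime_pows[OF sF x] by blast
qed

lemma (in group) inv_mult_cancel_left [simp]:
  "x \<in> carrier G \<Longrightarrow> y \<in> carrier G \<Longrightarrow> inv x \<otimes> (x \<otimes> y) = y"
  by (simp add: m_assoc[symmetric])

lemma (in group) mult_inv_cancel_left [simp]:
  "x \<in> carrier G \<Longrightarrow> y \<in> carrier G \<Longrightarrow> x \<otimes> (inv x \<otimes> y) = y"
  by (simp add: m_assoc[symmetric])

lemma (in group) conj_nat_pow: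
  assumes "g \<in> carrier G" "v \<in> carrier G"
  shows "(g \<otimes> v \<otimes> inv g) [^] (n::nat) = g \<otimes> v [^] n \<otimes> inv g"
proof (induction n)
  case (Suc n)
  have "(g \<otimes> v \<otimes> inv g) [^] Suc n = g \<otimes> (v [^] n \<otimes> (inv g \<otimes> g) \<otimes> (v \<otimes> inv g))"
    using Suc assms by (simp add: m_assoc)
  then show ?case using assms by (simp add: m_assoc[symmetric])
qed (use assms in simp)

lemma (in group) funpow_conj:
  assumes "y \<in> carrier G" "v \<in> carrier G"
  shows "((\<lambda>v. y \<otimes> v \<otimes> inv y) ^^ k) v = y [^] (k::nat) \<otimes> v \<otimes> inv (y [^] k)"
proof (induction k)
  case (Suc k)
  have "((\<lambda>v. y \<otimes> v \<otimes> inv y) ^^ Suc k) v = (y \<otimes> y [^] k) \<otimes> v \<otimes> (inv (y [^] k) \<otimes> inv y)"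
    using Suc assms by (simp add: m_assoc)
  then show ?case
    unfolding nat_pow_Suc2[OF assms(1)] using assms by (simp add: inv_mult_group)
qed (use assms in simp)

definition centralizer :: "('a, 'b) monoid_scheme \<Rightarrow> 'a set \<Rightarrow> 'a set" where
  "centralizer G S = {g \<in> carrier G. \<forall>s\<in>S. g \<otimes>\<^bsub>G\<^esub> s = s \<otimes>\<^bsub>G\<^esub> g}"

lemma (in group) subgroup_centralizer:
  assumes "S \<subseteq> carrier G" shows "subgroup (centralizer G S) G"
proof (rule subgroupI)
  fix a assume a: "a \<in> centralizer G S"
  have "inv a \<otimes> s = s \<otimes> inv a" if "s \<in> S" for s
  proof -
    have a': "a \<in> carrier G" "s \<in> carrier G" "a \<otimes> s = s \<otimes> a"
      using a that assms by (auto simp: centralizer_def)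
    have "inv a \<otimes> s = inv a \<otimes> (s \<otimes> a) \<otimes> inv a" using a' by (simp add: m_assoc)
    also have "\<dots> = inv a \<otimes> (a \<otimes> s) \<otimes> inv a" using a'(3) by simp
    also have "\<dots> = s \<otimes> inv a" using a'(1,2) by (simp add: m_assoc)
    finally show ?thesis .
  qed
  then show "inv a \<in> centralizer G S" using a by (auto simp: centralizer_def)
next
  fix a b assume a: "a \<in> centralizer G S" and b: "b \<in> centralizer G S"
  have "a \<otimes> b \<otimes> s = s \<otimes> (a \<otimes> b)" if s: "s \<in> S" for s
  proof -
    have c: "a \<in> carrier G" "b \<in> carrier G" "s \<in> carrier G" using a b s assms
      by (auto simp: centralizer_def)
    have "a \<otimes> b \<otimes> s = a \<otimes> (s \<otimes> b)" using b s c by (simp add: m_assoc centralizer_def)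
    also have "\<dots> = s \<otimes> (a \<otimes> b)" using a s c by (simp add: m_assoc[symmetric] centralizer_def)
    finally show ?thesis .
  qed
  then show "a \<otimes> b \<in> centralizer G S" using a b by (auto simp: centralizer_def)
qed (use assms in \<open>auto simp: centralizer_def intro!: exI[of _ \<one>]\<close>)

lemma (in group) centralizer_subset_centralizer_generate:
  assumes S: "S \<subseteq> carrier G" shows "centralizer G S \<subseteq> centralizer G (generate G S)"
proof
  fix g assume g: "g \<in> centralizer G S"
  then have "S \<subseteq> centralizer G {g}" using S by (auto simp: centralizer_def)
  moreover have "subgroup (centralizer G {g}) G" using g
    by (intro subgroup_centralizer) (auto simp: centralizer_def)
  ultimately have "generate G S \<subseteq> centralizer G {g}" by (rule generate_subgroup_incl)
  then show "g \<in> centralizer G (generate G S)" using g by (auto simp: centralizer_def)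
qed

lemma (in group) card_set_mult_le:
  assumes "A \<subseteq> carrier G" "B \<subseteq> carrier G" "finite (carrier G)"
  shows "card (A <#> B) \<le> card A * card B"
proof -
  have "A <#> B = (\<lambda>(a, b). a \<otimes> b) ` (A \<times> B)" by (auto simp: set_mult_def)
  moreover have "finite (A \<times> B)" using assms finite_subset by blast
  ultimately show ?thesis using card_image_le by (metis card_cartesian_product)
qed

text \<open>Since \<open>y [^] q \<in> Q\<close>, every element of \<open>Q <#> generate G {y}\<close> is \<open>z \<otimes> y [^] e\<close>
  with \<open>z \<in> Q\<close> and \<open>e < q\<close>.\<close>
lemma (in group) card_set_mult_cyclic_le:
  assumes fin: "finite (carrier G)" and Q: "subgroup Q G"
    and y: "y \<in> carrier G" and q: "q > 0" "y [^] q \<in> Q"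
  shows "card (Q <#> generate G {y}) \<le> card Q * q"
proof -
  have Qc: "Q \<subseteq> carrier G" using Q subgroup.subset by blast
  have "Q <#> generate G {y} \<subseteq> (\<lambda>(z, e). z \<otimes> y [^] e) ` (Q \<times> {..<q})"
  proof
    fix g assume "g \<in> Q <#> generate G {y}"
    then obtain z k where z: "z \<in> Q" and g: "g = z \<otimes> y [^] (k::nat)"
      using generate_pow_on_finite_carrier[OF fin y] by (auto simp: set_mult_def)
    have "y [^] k = (y [^] q) [^] (k div q) \<otimes> y [^] (k mod q)"
      using y by (simp add: nat_pow_pow nat_pow_mult)
    then have "g = (z \<otimes> (y [^] q) [^] (k div q)) \<otimes> y [^] (k mod q)"
      using g z Qc y by (simp add: m_assoc subset_iff)
    moreover have "z \<otimes> (y [^] q) [^] (k div q) \<in> Q"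
      using z subgroup_nat_pow_closed[OF Q q(2)] subgroup.m_closed[OF Q] by blast
    ultimately show "g \<in> (\<lambda>(z, e). z \<otimes> y [^] e) ` (Q \<times> {..<q})" using q(1) by force
  qed
  moreover have "finite (Q \<times> {..<q})" using finite_subset[OF Qc fin] by blast
  ultimately have "card (Q <#> generate G {y}) \<le> card (Q \<times> {..<q})"
    by (meson card_image_le card_mono finite_imageI le_trans)
  then show ?thesis by (simp add: card_cartesian_product)
qed

lemma (in group) card_rcosets_le:
  assumes "finite (carrier G)" "subgroup A G" "order G \<le> b * card A"
  shows "card (rcosets A) \<le> b"
proof -
  have "card (rcosets A) * card A \<le> b * card A" using lagrange[OF assms(2)] assms(3) by simp
  then show ?thesis using subgroup.finite_imp_card_positive[OF assms(2,1)] by simp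
qed

lemma (in group) card_mult_le_if_distinct_cosets:
  assumes U: "subgroup U G" and W: "subgroup W G" "U \<subseteq> W" "finite W"
    and c: "\<And>k. k < d \<Longrightarrow> c k \<in> W"
    and distinct: "\<And>i j. i < d \<Longrightarrow> j < d \<Longrightarrow> c i \<otimes> inv (c j) \<in> U \<Longrightarrow> i = j"
  shows "d * card U \<le> card W"
proof -
  have Wc: "W \<subseteq> carrier G" using W(1) subgroup.subset by blast
  have "inj_on (\<lambda>(k, u). u \<otimes> c k) ({..<d} \<times> U)"
  proof (rule inj_onI, clarsimp)
    fix i j u u' assume ij: "i < d" "j < d" and u: "u \<in> U" "u' \<in> U" and eq: "u \<otimes> c i = u' \<otimes> c j"
    have car: "u \<in> carrier G" "u' \<in> carrier G" "c i \<in> carrier G" "c j \<in> carrier G"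
      using u W(2) Wc c ij by auto
    then have "c i \<otimes> inv (c j) = inv u \<otimes> u'"
      using eq by (metis inv_solve_left inv_solve_right m_assoc inv_closed m_closed)
    moreover have "inv u \<otimes> u' \<in> U" using u U by (simp add: subgroup.m_closed subgroup.m_inv_closed)
    ultimately have "i = j" using distinct ij by simp
    then show "i = j \<and> u = u'" using eq car by simp
  qed
  moreover have "(\<lambda>(k, u). u \<otimes> c k) ` ({..<d} \<times> U) \<subseteq> W"
    using W c subgroup.m_closed by fastforce
  ultimately have "card ({..<d} \<times> U) \<le> card W" using card_inj_on_le W(3) by blast
  then show ?thesis by (simp add: card_cartesian_product)
qed

lemma mult_power_le_powr:
  fixes h B e q c f :: real
  assumes h: "1 \<le> h" and q: "0 \<le> q" "q \<le> h" and c: "0 \<le> c" "c \<le> h"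
    and f: "0 \<le> f" "f \<le> B * h powr e"
  shows "q * c ^ r * f ^ n \<le> B ^ n * h powr (e * n + r + 1)"
proof -
  have "q * c ^ r * f ^ n \<le> h * h ^ r * (B * h powr e) ^ n"
    using assms by (intro mult_mono power_mono) auto
  also have "\<dots> = B ^ n * h powr (e * n + r + 1)"
    using h by (simp add: power_mult_distrib powr_add powr_realpow[symmetric] powr_powr[symmetric]
        flip: powr_realpow)
  finally show ?thesis .
qed

lemma (in group) real_le_powr_sylow:
  fixes p :: nat and B e :: real
  assumes fin: "finite (carrier G)" and p: "Factorial_Ring.prime p" and Hp: "sylow_subgroup G p Hp"
    and x: "x \<le> p ^ t * (p ^ k) ^ r * f ^ n" and dvd: "p ^ t dvd order G" "p ^ k dvd order G"
    and f: "real f \<le> B * real (p ^ k) powr e" and B: "B > 0" and e: "e > 0"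
  shows "real x \<le> B ^ n * real (card Hp) powr (e * n + r + 1)"
proof -
  have t: "p ^ t \<le> card Hp" and k: "p ^ k \<le> card Hp"
    using prime_power_dvd_order_le_sylow[OF fin p Hp] dvd by auto
  have "1 \<le> p ^ t" using prime_gt_0_nat[OF p] by simp
  with t have "1 \<le> card Hp" by linarith
  have "real (p ^ k) powr e \<le> real (card Hp) powr e" using k e by (intro powr_mono2) auto
  then have "B * real (p ^ k) powr e \<le> B * real (card Hp) powr e" using B by simp
  then have "real f \<le> B * real (card Hp) powr e" using f by linarith
  then have "real (p ^ t) * real (p ^ k) ^ r * real f ^ n \<le>
      B ^ n * real (card Hp) powr (e * n + r + 1)"
    using t k p \<open>1 \<le> card Hp\<close> by (intro mult_power_le_powr) (auto simp: prime_gt_0_nat)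
  moreover have "real x \<le> real (p ^ t * (p ^ k) ^ r * f ^ n)" using x by (simp only: of_nat_le_iff)
  ultimately show ?thesis by simp
qed

section \<open>The coprime part of the centre\<close>

definition central_torsion :: "('a, 'b) monoid_scheme \<Rightarrow> (nat \<Rightarrow> bool) \<Rightarrow> 'a set" where
  "central_torsion G P = {z \<in> centralizer G (carrier G). \<exists>n. P n \<and> z [^]\<^bsub>G\<^esub> n = \<one>\<^bsub>G\<^esub>}"

lemma (in group) central_torsion_subset: "central_torsion G P \<subseteq> centralizer G (carrier G)"
  by (auto simp: central_torsion_def)

lemma (in group) finite_central_torsion:
  "finite (carrier G) \<Longrightarrow> finite (central_torsion G P)"
  by (rule finite_subset) (auto simp: central_torsion_def centralizer_def)

lemma (in group) subgroup_central_torsion: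
  assumes P1: "P 1" and P_mult: "\<And>a b. P a \<Longrightarrow> P b \<Longrightarrow> P (a * b)"
  shows "subgroup (central_torsion G P) G"
proof (rule subgroupI)
  have Z: "subgroup (centralizer G (carrier G)) G" using subgroup_centralizer by simp
  show "central_torsion G P \<noteq> {}"
    using P1 subgroup.one_closed[OF Z] by (auto simp: central_torsion_def intro!: exI[of _ 1])
  fix a b assume a: "a \<in> central_torsion G P" and b: "b \<in> central_torsion G P"
  then obtain m n where m: "P m" "a [^] m = \<one>" and n: "P n" "b [^] n = \<one>"
    and aZ: "a \<in> centralizer G (carrier G)" and bZ: "b \<in> centralizer G (carrier G)"
    by (auto simp: central_torsion_def)
  have ac: "a \<in> carrier G" and bc: "b \<in> carrier G" using aZ bZ by (auto simp: centralizer_def)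
  have "inv a [^] m = \<one>" using nat_pow_inv[OF ac] m by simp
  then show "inv a \<in> central_torsion G P"
    using subgroup.m_inv_closed[OF Z aZ] m(1) by (auto simp: central_torsion_def)
  have "(a \<otimes> b) [^] (m * n) = (a [^] m) [^] n \<otimes> (b [^] n) [^] m"
    using pow_mult_distrib[of a b "m * n"] aZ ac bc
    by (simp add: centralizer_def nat_pow_pow mult.commute)
  then have "(a \<otimes> b) [^] (m * n) = \<one>" using m n by simp
  then show "a \<otimes> b \<in> central_torsion G P"
    using subgroup.m_closed[OF Z aZ bZ] P_mult[OF m(1) n(1)] by (auto simp: central_torsion_def)
qed (auto simp: central_torsion_def centralizer_def)

lemma (in group) central_torsion_iso_image:
  assumes fin: "finite (carrier G)" and \<phi>: "\<phi> \<in> iso G G"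
  shows "\<phi> ` central_torsion G P = central_torsion G P"
proof -
  have hom: "\<phi> \<in> hom G G" and bij: "bij_betw \<phi> (carrier G) (carrier G)" using \<phi>
    by (auto simp: iso_def)
  have A: "central_torsion G P \<subseteq> carrier G" by (auto simp: central_torsion_def centralizer_def)
  have "\<phi> z \<in> central_torsion G P" if z: "z \<in> central_torsion G P" for z
  proof -
    obtain n where n: "P n" "z [^] n = \<one>" using z by (auto simp: central_torsion_def)
    have zc: "z \<in> carrier G" using z A by blast
    have "\<phi> z \<otimes> \<phi> g0 = \<phi> g0 \<otimes> \<phi> z" if "g0 \<in> carrier G" for g0
      using z that hom_mult[OF hom] zc
      by (simp add: central_torsion_def centralizer_def flip: hom_mult[OF hom])
    then have "\<phi> z \<otimes> g = g \<otimes> \<phi> z" if "g \<in> carrier G" for g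
      using that bij by (metis bij_betw_imp_surj_on imageE)
    moreover have "\<phi> z [^] n = \<one>"
      using hom_nat_pow[OF hom zc is_group is_group, symmetric] hom_one[OF hom is_group is_group] n
      by simp
    ultimately show ?thesis using hom zc n(1)
      by (auto simp: central_torsion_def centralizer_def hom_def)
  qed
  then have "\<phi> ` central_torsion G P \<subseteq> central_torsion G P" by blast
  moreover have "card (\<phi> ` central_torsion G P) = card (central_torsion G P)"
    using card_image inj_on_subset[OF bij_betw_imp_inj_on[OF bij] A] by blast
  ultimately show ?thesis using card_subset_eq finite_subset[OF A fin] by blast
qed

text \<open>Splitting off the \<open>p\<close>-part: \<open>z = inv (z [^] (q * w)) \<otimes> z [^] (p ^ a * u)\<close> where
  \<open>order G = p ^ a * q\<close> and \<open>p ^ a * u = q * w + 1\<close>.\<close>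
lemma (in group) card_center_le:
  fixes p :: nat
  assumes fin: "finite (carrier G)" and p: "Factorial_Ring.prime p"
  shows "card (centralizer G (carrier G)) \<le>
    card (central_torsion G (\<lambda>n. \<exists>j. n = p ^ j)) * card (central_torsion G (\<lambda>n. coprime n p))"
proof -
  define Z where "Z = centralizer G (carrier G)"
  define Zp where "Zp = central_torsion G (\<lambda>n. \<exists>j. n = p ^ j)"
  define A where "A = central_torsion G (\<lambda>n. coprime n p)"
  have sZ: "subgroup Z G" using subgroup_centralizer Z_def by simp
  have "order G \<noteq> 0" using fin by (simp add: order_gt_0_iff_finite[symmetric])
  moreover have "\<not> is_unit p" using prime_gt_1_nat[OF p] by simp
  ultimately obtain q where q: "order G = p ^ multiplicity p (order G) * q" "\<not> p dvd q"
    using multiplicity_decompose' by blast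
  define a where "a = multiplicity p (order G)"
  have "coprime (p ^ a) q" using q(2) p by (simp add: prime_imp_coprime coprime_commute)
  moreover obtain u w where "p ^ a * u = q * w + gcd (p ^ a) q"
    using bezout_nat[of "p ^ a" q] p prime_gt_0_nat by auto
  ultimately have uw: "p ^ a * u = Suc (q * w)" by simp
  have "Z \<subseteq> (\<lambda>(x, y). x \<otimes> y) ` (Zp \<times> A)"
  proof
    fix z assume zZ: "z \<in> Z"
    have zc: "z \<in> carrier G" using zZ Z_def by (simp add: centralizer_def)
    have zo: "z [^] (p ^ a * q) = \<one>" using pow_order_eq_1[OF zc] q(1) a_def by simp
    define z1 where "z1 = inv (z [^] (q * w))"
    define z2 where "z2 = z [^] (p ^ a * u)"
    have "z1 [^] (p ^ a) = inv ((z [^] (p ^ a * q)) [^] w)"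
      using zc by (simp add: z1_def nat_pow_inv nat_pow_pow ac_simps)
    then have "z1 \<in> Zp"
      using zo subgroup.m_inv_closed[OF sZ subgroup_nat_pow_closed[OF sZ zZ]]
      by (auto simp: Zp_def z1_def central_torsion_def Z_def)
    moreover have "z2 [^] q = (z [^] (p ^ a * q)) [^] u"
      using zc by (simp add: z2_def nat_pow_pow ac_simps)
    then have "z2 \<in> A"
      using zo subgroup_nat_pow_closed[OF sZ zZ] q(2) p
      by (auto simp: A_def z2_def central_torsion_def Z_def prime_imp_coprime coprime_commute
          intro!: exI[of _ q])
    moreover have "z = z1 \<otimes> z2" using uw zc by (simp add: z1_def z2_def)
    ultimately show "z \<in> (\<lambda>(x, y). x \<otimes> y) ` (Zp \<times> A)" by force
  qed
  moreover have "finite (Zp \<times> A)" using finite_central_torsion[OF fin] by (simp add: Zp_def A_def)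
  ultimately have "card Z \<le> card (Zp \<times> A)"
    by (meson card_image_le card_mono finite_imageI le_trans)
  then show ?thesis by (simp add: Z_def Zp_def A_def card_cartesian_product)
qed

lemma (in group) subgroup_central_prime_power_torsion:
  "subgroup (central_torsion G (\<lambda>n. \<exists>j. n = (p::nat) ^ j)) G"
proof (rule subgroup_central_torsion)
  show "\<exists>j. 1 = p ^ j" by (intro exI[of _ 0]) simp
  show "\<exists>j. a * b = p ^ j" if "\<exists>j. a = p ^ j" "\<exists>j. b = p ^ j" for a b
    using that by (metis power_add)
qed

lemma (in group) card_central_prime_power_torsion:
  fixes p :: nat
  assumes fin: "finite (carrier G)" and p: "Factorial_Ring.prime p"
  shows "\<exists>t. card (central_torsion G (\<lambda>n. \<exists>j. n = p ^ j)) = p ^ t"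
proof -
  have S: "subgroup (central_torsion G (\<lambda>n. \<exists>j. n = p ^ j)) G"
    by (rule subgroup_central_prime_power_torsion)
  moreover have "\<forall>x\<in>central_torsion G (\<lambda>n. \<exists>j. n = p ^ j). \<exists>j. x [^] (p ^ j) \<in> {\<one>}"
    by (auto simp: central_torsion_def)
  ultimately show ?thesis
    using index_prime_power_if_prime_power_pows[OF fin p triv_subgroup] subgroup.one_closed
    by fastforce
qed

lemma (in group) central_coprime_torsion_properties:
  fixes p :: nat
  assumes fin: "finite (carrier G)" and p: "Factorial_Ring.prime p"
  defines "A \<equiv> central_torsion G (\<lambda>n. coprime n p)"
  shows "characteristic_subgroup G A" "comm_group (G\<lparr>carrier := A\<rparr>)" "coprime (card A) p"
proof -
  have sA: "subgroup A G" unfolding A_def by (rule subgroup_central_torsion) auto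
  then show "characteristic_subgroup G A"
    using central_torsion_iso_image[OF fin] by (simp add: characteristic_subgroup_def A_def)
  show "comm_group (G\<lparr>carrier := A\<rparr>)"
  proof (rule group.group_comm_groupI[OF subgroup.subgroup_is_group[OF sA is_group]])
    fix x y assume "x \<in> carrier (G\<lparr>carrier := A\<rparr>)" "y \<in> carrier (G\<lparr>carrier := A\<rparr>)"
    then have "x \<in> centralizer G (carrier G)" "y \<in> carrier G"
      using central_torsion_subset by (auto simp: A_def centralizer_def)
    then show "x \<otimes>\<^bsub>G\<lparr>carrier := A\<rparr>\<^esub> y = y \<otimes>\<^bsub>G\<lparr>carrier := A\<rparr>\<^esub> x" by (simp add: centralizer_def)
  qed
  have "\<forall>x\<in>A. \<exists>m::nat. coprime m p \<and> x [^] m \<in> {\<one>}" by (auto simp: A_def central_torsion_def)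
  then have "\<not> p dvd card A"
    using prime_not_dvd_index_if_coprime_pows[OF fin p triv_subgroup sA] subgroup.one_closed[OF sA]
    by simp
  then show "coprime (card A) p" using p by (simp add: prime_imp_coprime coprime_commute)
qed

section \<open>Automorphisms of order prime to \<open>p\<close> of elementary abelian \<open>p\<close>-groups\<close>

lemma nat_pow_integer_mod_product_group:
  assumes "x \<in> carrier (product_group I (\<lambda>_. integer_mod_group p))"
  shows "x [^]\<^bsub>product_group I (\<lambda>_. integer_mod_group p)\<^esub> (n::nat) =
    (\<lambda>i\<in>I. (int n * x i) mod int p)"
proof (induction n)
  case (Suc n)
  then have "x [^]\<^bsub>product_group I (\<lambda>_. integer_mod_group p)\<^esub> Suc n =
        (\<lambda>i\<in>I. ((int n * x i) mod int p + x i) mod int p)"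
    using assms by (simp add: restrict_def fun_eq_iff)
  also have "\<dots> = (\<lambda>i\<in>I. (int (Suc n) * x i) mod int p)"
    by (intro restrict_ext) (simp add: mod_add_left_eq mod_add_right_eq distrib_right add.commute)
  finally show ?case .
qed simp

lemma elementary_abelian_if_iso_product:
  assumes F: "group F" and S: "subgroup Fp F"
    and iso: "F\<lparr>carrier := Fp\<rparr> \<cong> product_group {..<m} (\<lambda>_. integer_mod_group p)"
  shows "comm_group (F\<lparr>carrier := Fp\<rparr>)" "\<forall>x\<in>Fp. x [^]\<^bsub>F\<^esub> p = \<one>\<^bsub>F\<^esub>"
proof -
  interpret F: group F by fact
  define PG where "PG = product_group {..<m} (\<lambda>_. integer_mod_group p)"
  interpret S: group "F\<lparr>carrier := Fp\<rparr>" using subgroup.subgroup_is_group[OF S F.is_group] .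
  have "PG \<cong> F\<lparr>carrier := Fp\<rparr>" using S.iso_sym iso PG_def by blast
  then obtain \<psi> where \<psi>: "\<psi> \<in> iso PG (F\<lparr>carrier := Fp\<rparr>)" by (auto simp: is_iso_def)
  interpret \<psi>: group_hom PG "F\<lparr>carrier := Fp\<rparr>" \<psi>
    using \<psi> by (simp add: group_hom_def group_hom_axioms_def iso_def PG_def)
  have onto: "\<psi> ` carrier PG = Fp" using \<psi> by (simp add: iso_def bij_betw_def)
  show "comm_group (F\<lparr>carrier := Fp\<rparr>)"
  proof (rule S.group_comm_groupI)
    fix x y assume "x \<in> carrier (F\<lparr>carrier := Fp\<rparr>)" "y \<in> carrier (F\<lparr>carrier := Fp\<rparr>)"
    then obtain a b where "a \<in> carrier PG" "b \<in> carrier PG" "x = \<psi> a" "y = \<psi> b" using onto by auto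
    moreover have "a \<otimes>\<^bsub>PG\<^esub> b = b \<otimes>\<^bsub>PG\<^esub> a" by (simp add: PG_def add.commute)
    ultimately show "x \<otimes>\<^bsub>F\<lparr>carrier := Fp\<rparr>\<^esub> y = y \<otimes>\<^bsub>F\<lparr>carrier := Fp\<rparr>\<^esub> x"
      by (metis \<psi>.hom_mult)
  qed
  show "\<forall>x\<in>Fp. x [^]\<^bsub>F\<^esub> p = \<one>\<^bsub>F\<^esub>"
  proof
    fix x assume "x \<in> Fp"
    then obtain a where a: "a \<in> carrier PG" "x = \<psi> a" using onto by auto
    have "a [^]\<^bsub>PG\<^esub> p = \<one>\<^bsub>PG\<^esub>"
      using nat_pow_integer_mod_product_group[of a "{..<m}" p p] a(1) by (simp add: PG_def)
    then have "\<psi> a [^]\<^bsub>F\<lparr>carrier := Fp\<rparr>\<^esub> p = \<one>\<^bsub>F\<lparr>carrier := Fp\<rparr>\<^esub>"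
      by (metis \<psi>.hom_nat_pow \<psi>.hom_one a(1))
    then show "x [^]\<^bsub>F\<^esub> p = \<one>\<^bsub>F\<^esub>" using a by (simp add: F.nat_pow_consistent[symmetric])
  qed
qed

locale coprime_automorphism = comm_group G for G (structure) +
  fixes \<tau> :: "'a \<Rightarrow> 'a" and p n :: nat
  assumes tau_hom: "\<tau> \<in> hom G G"
    and exponent: "\<And>v. v \<in> carrier G \<Longrightarrow> v [^] p = \<one>" and p_pos: "p > 0"
    and n_pos: "n > 0" and coprime_n_p: "coprime n p"
    and funpow_n: "\<And>v. v \<in> carrier G \<Longrightarrow> (\<tau> ^^ n) v = v"
    and finite_carrier: "finite (carrier G)"
begin

lemma funpow_closed [simp]: "v \<in> carrier G \<Longrightarrow> (\<tau> ^^ k) v \<in> carrier G"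
  using tau_hom by (induction k) (auto simp: hom_def)

lemma funpow_mult: "x \<in> carrier G \<Longrightarrow> y \<in> carrier G \<Longrightarrow> (\<tau> ^^ k) (x \<otimes> y) = (\<tau> ^^ k) x \<otimes> (\<tau> ^^ k) y"
  using tau_hom by (induction k) (auto simp: hom_def)

lemma group_hom_funpow: "group_hom G G (\<tau> ^^ k)"
  by (auto intro!: homI simp: group_hom_def group_hom_axioms_def funpow_mult is_group)

lemma funpow_inv: "x \<in> carrier G \<Longrightarrow> (\<tau> ^^ k) (inv x) = inv ((\<tau> ^^ k) x)"
  using group_hom.hom_inv[OF group_hom_funpow] by simp

lemma funpow_mult_n: "v \<in> carrier G \<Longrightarrow> (\<tau> ^^ (n * j)) v = v"
  by (induction j) (simp_all add: funpow_add funpow_n)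

definition stable :: "'a set \<Rightarrow> bool" where
  "stable U \<longleftrightarrow> subgroup U G \<and> (\<forall>u\<in>U. \<tau> u \<in> U)"

lemma stable_funpow: "stable U \<Longrightarrow> u \<in> U \<Longrightarrow> (\<tau> ^^ k) u \<in> U"
  by (induction k) (auto simp: stable_def)

lemma stable_subgroup: "stable U \<Longrightarrow> subgroup U G"
  by (simp add: stable_def)

lemma stable_subset: "stable U \<Longrightarrow> U \<subseteq> carrier G"
  by (simp add: stable_def subgroup.subset)

text \<open>Since \<open>\<tau> ^^ n\<close> is the identity, \<open>\<tau> ^^ k\<close> has the inverse \<open>\<tau> ^^ (n * k - k)\<close>.\<close>
lemma stable_funpow_iff:
  assumes "stable U" "v \<in> carrier G" shows "(\<tau> ^^ k) v \<in> U \<longleftrightarrow> v \<in> U"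
proof
  assume "(\<tau> ^^ k) v \<in> U"
  moreover have "n * k = (n * k - k) + k" using n_pos by (simp add: le_add_diff_inverse2)
  then have "v = (\<tau> ^^ (n * k - k)) ((\<tau> ^^ k) v)"
    using funpow_mult_n[OF assms(2), of k] by (metis funpow_add o_apply)
  ultimately show "v \<in> U" using stable_funpow[OF assms(1)] by metis
qed (use stable_funpow[OF assms(1)] in blast)

definition cong_mod :: "'a set \<Rightarrow> 'a \<Rightarrow> 'a \<Rightarrow> bool" where
  "cong_mod U x y \<longleftrightarrow> x \<otimes> inv y \<in> U"

lemma cong_mod_refl: "subgroup U G \<Longrightarrow> x \<in> carrier G \<Longrightarrow> cong_mod U x x"
  by (simp add: cong_mod_def subgroup.one_closed)

lemma cong_mod_sym:
  "subgroup U G \<Longrightarrow> x \<in> carrier G \<Longrightarrow> y \<in> carrier G \<Longrightarrow> cong_mod U x y \<Longrightarrow> cong_mod U y x"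
  unfolding cong_mod_def by (metis inv_mult_group inv_inv subgroup.m_inv_closed inv_closed)

lemma cong_mod_mult:
  assumes "subgroup U G" "x \<in> carrier G" "y \<in> carrier G" "x' \<in> carrier G" "y' \<in> carrier G"
    and "cong_mod U x y" "cong_mod U x' y'"
  shows "cong_mod U (x \<otimes> x') (y \<otimes> y')"
proof -
  have "x \<otimes> x' \<otimes> inv (y \<otimes> y') = (x \<otimes> inv y) \<otimes> (x' \<otimes> inv y')"
    using assms by (simp add: m_ac inv_mult)
  then show ?thesis using assms subgroup.m_closed by (metis cong_mod_def)
qed

lemma cong_mod_trans:
  assumes "subgroup U G" "x \<in> carrier G" "y \<in> carrier G" "z \<in> carrier G"
    and "cong_mod U x y" "cong_mod U y z"
  shows "cong_mod U x z"
proof -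
  have "x \<otimes> inv z = (x \<otimes> inv y) \<otimes> (y \<otimes> inv z)" using assms(2-4) by (simp add: m_assoc)
  then show ?thesis using assms subgroup.m_closed unfolding cong_mod_def by metis
qed

lemma cong_mod_funpow_iff:
  assumes "stable U" "x \<in> carrier G" "y \<in> carrier G"
  shows "cong_mod U ((\<tau> ^^ k) x) ((\<tau> ^^ k) y) \<longleftrightarrow> cong_mod U x y"
  using stable_funpow_iff[OF assms(1), of "x \<otimes> inv y" k] assms(2,3)
  by (simp add: cong_mod_def funpow_mult funpow_inv)

definition acts_trivially :: "'a set \<Rightarrow> 'a set \<Rightarrow> nat \<Rightarrow> bool" where
  "acts_trivially U V k \<longleftrightarrow> (\<forall>v\<in>V. cong_mod U ((\<tau> ^^ k) v) v)"

lemma acts_trivially_add: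
  assumes U: "stable U" and V: "stable V"
    and a: "acts_trivially U V a" and b: "acts_trivially U V b"
  shows "acts_trivially U V (a + b)"
  unfolding acts_trivially_def
proof
  fix v assume v: "v \<in> V"
  have bv: "(\<tau> ^^ b) v \<in> V" using stable_funpow[OF V v] .
  have "cong_mod U ((\<tau> ^^ a) ((\<tau> ^^ b) v)) ((\<tau> ^^ b) v)" "cong_mod U ((\<tau> ^^ b) v) v"
    using a b v bv by (simp_all add: acts_trivially_def)
  then show "cong_mod U ((\<tau> ^^ (a + b)) v) v"
    using cong_mod_trans[OF stable_subgroup[OF U]] stable_subset[OF V] v bv
    by (simp add: funpow_add) (meson funpow_closed subsetD)
qed

lemma acts_trivially_diff:
  assumes U: "stable U" and V: "stable V"
    and ab: "acts_trivially U V (a + b)" and a: "acts_trivially U V a"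
  shows "acts_trivially U V b"
  unfolding acts_trivially_def
proof
  fix v assume v: "v \<in> V"
  have bv: "(\<tau> ^^ b) v \<in> V" using stable_funpow[OF V v] .
  have "cong_mod U ((\<tau> ^^ a) ((\<tau> ^^ b) v)) ((\<tau> ^^ b) v)" "cong_mod U ((\<tau> ^^ a) ((\<tau> ^^ b) v)) v"
    using a ab v bv by (simp_all add: acts_trivially_def funpow_add)
  then show "cong_mod U ((\<tau> ^^ b) v) v"
    using cong_mod_trans[OF stable_subgroup[OF U]] cong_mod_sym[OF stable_subgroup[OF U]]
      stable_subset[OF V] v bv
    by (meson funpow_closed subsetD)
qed

lemma acts_trivially_0: "stable U \<Longrightarrow> stable V \<Longrightarrow> acts_trivially U V 0"
  using cong_mod_refl stable_subgroup stable_subset unfolding acts_trivially_def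
  by (metis funpow_0 subsetD)

lemma acts_trivially_mult:
  assumes "stable U" "stable V" "acts_trivially U V a" shows "acts_trivially U V (a * j)"
proof (induction j)
  case 0
  then show ?case using acts_trivially_0[OF assms(1,2)] by simp
next
  case (Suc j)
  then show ?case using acts_trivially_add[OF assms Suc] by simp
qed

lemma acts_trivially_n: "stable U \<Longrightarrow> stable V \<Longrightarrow> acts_trivially U V n"
  using acts_trivially_0 funpow_n stable_subset unfolding acts_trivially_def
  by (metis funpow_0 subsetD)

lemma acts_trivially_gcd:
  assumes "stable U" "stable V" "acts_trivially U V a" "acts_trivially U V b" "a \<noteq> 0"
  shows "acts_trivially U V (gcd a b)"
proof -
  obtain x y where xy: "a * x = b * y + gcd a b" using bezout_nat[OF assms(5)] by blast
  then have "acts_trivially U V (b * y + gcd a b)" using acts_trivially_mult[OF assms(1-3), of x]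
    by simp
  then show ?thesis using acts_trivially_diff[OF assms(1,2)] acts_trivially_mult[OF assms(1,2,4)]
    by blast
qed

lemma stable_generate:
  assumes "S \<subseteq> carrier G" "\<And>s. s \<in> S \<Longrightarrow> \<tau> s \<in> S" shows "stable (generate G S)"
proof -
  have "group_hom G G \<tau>" using group_hom_funpow[of 1] by simp
  then have "subgroup {x \<in> carrier G. \<tau> x \<in> generate G S} G"
    using group_hom.subgroup_vimage generate_is_subgroup[OF assms(1)] by blast
  moreover have "S \<subseteq> {x \<in> carrier G. \<tau> x \<in> generate G S}" using assms by (auto intro: generate.incl)
  ultimately have "generate G S \<subseteq> {x \<in> carrier G. \<tau> x \<in> generate G S}"
    by (rule generate_subgroup_incl[rotated])
  then show ?thesis using generate_is_subgroup[OF assms(1)] by (auto simp: stable_def)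
qed

lemma acts_trivially_generate:
  assumes S: "S \<subseteq> carrier G" and U: "subgroup U G" and d: "\<And>s. s \<in> S \<Longrightarrow> cong_mod U ((\<tau> ^^ d) s) s"
  shows "acts_trivially U (generate G S) d"
proof -
  have "group_hom G G (\<lambda>w. (\<tau> ^^ d) w \<otimes> inv w)"
   
      by (auto intro!: homI simp: group_hom_def group_hom_axioms_def is_group funpow_mult inv_mult
          m_ac)
  then have "subgroup {x \<in> carrier G. (\<tau> ^^ d) x \<otimes> inv x \<in> U} G"
    using group_hom.subgroup_vimage U by blast
  moreover have "S \<subseteq> {x \<in> carrier G. (\<tau> ^^ d) x \<otimes> inv x \<in> U}" using S d by (auto simp: cong_mod_def)
  ultimately have "generate G S \<subseteq> {x \<in> carrier G. (\<tau> ^^ d) x \<otimes> inv x \<in> U}"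
    by (rule generate_subgroup_incl[rotated])
  moreover have "(\<tau> ^^ k) v = v" if "v \<in> carrier G" "(\<tau> ^^ k) v \<otimes> inv v = \<one>" for v
    using inv_equality[of "(\<tau> ^^ k) v" "inv v"] that by simp
  ultimately show ?thesis by (auto simp: acts_trivially_def cong_mod_def)
qed

definition orbit_span :: "'a set \<Rightarrow> 'a \<Rightarrow> 'a set" where
  "orbit_span U v = generate G (U \<union> range (\<lambda>k. (\<tau> ^^ k) v))"

lemma orbit_span_incl:
  assumes "stable U" "v \<in> carrier G" shows "U \<subseteq> orbit_span U v" "(\<tau> ^^ k) v \<in> orbit_span U v"
  unfolding orbit_span_def by (auto intro: generate.incl)

lemma stable_orbit_span:
  assumes U: "stable U" and v: "v \<in> carrier G" shows "stable (orbit_span U v)"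
  unfolding orbit_span_def
proof (rule stable_generate)
  show "U \<union> range (\<lambda>k. (\<tau> ^^ k) v) \<subseteq> carrier G" using stable_subset[OF U] v by auto
  fix s assume "s \<in> U \<union> range (\<lambda>k. (\<tau> ^^ k) v)"
  then consider "s \<in> U" | k where "s = (\<tau> ^^ k) v" by auto
  then show "\<tau> s \<in> U \<union> range (\<lambda>k. (\<tau> ^^ k) v)"
  proof cases
    case 1
    then show ?thesis using U by (simp add: stable_def)
  next
    case 2
    then have "\<tau> s = (\<tau> ^^ Suc k) v" by simp
    then show ?thesis by (metis UnI2 rangeI)
  qed
qed

lemma orbit_span_subset:
  assumes "stable U" "stable V" "U \<subseteq> V" "v \<in> V" shows "orbit_span U v \<subseteq> V"
  unfolding orbit_span_def using assms stable_funpow[OF assms(2,4)]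
  by (intro generate_subgroup_incl[OF _ stable_subgroup[OF assms(2)]]) auto

lemma acts_trivially_orbit_span:
  assumes U: "stable U" and v: "v \<in> carrier G" and d: "cong_mod U ((\<tau> ^^ d) v) v"
  shows "acts_trivially U (orbit_span U v) d"
  unfolding orbit_span_def
proof (rule acts_trivially_generate)
  show "U \<union> range (\<lambda>k. (\<tau> ^^ k) v) \<subseteq> carrier G" using stable_subset[OF U] v by auto
  show "subgroup U G" using U by (rule stable_subgroup)
  fix s assume "s \<in> U \<union> range (\<lambda>k. (\<tau> ^^ k) v)"
  then consider "s \<in> U" | k where "s = (\<tau> ^^ k) v" by auto
  then show "cong_mod U ((\<tau> ^^ d) s) s"
  proof cases
    case 1
    then show ?thesis using stable_funpow[OF U 1] stable_subgroup[OF U]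
      by (simp add: cong_mod_def subgroup.m_closed subgroup.m_inv_closed)
  next
    case 2
    then have "(\<tau> ^^ d) s = (\<tau> ^^ k) ((\<tau> ^^ d) v)" by (metis add.commute funpow_add o_apply)
    then show ?thesis using cong_mod_funpow_iff[OF U _ v] d 2 v by simp
  qed
qed

lemma not_cong_mod_before_return:
  assumes U: "stable U" and v: "v \<in> carrier G"
    and no_return: "\<And>k. 0 < k \<Longrightarrow> k < d \<Longrightarrow> \<not> cong_mod U ((\<tau> ^^ k) v) v"
    and ab: "a < b" "b < d"
  shows "\<not> cong_mod U ((\<tau> ^^ a) v) ((\<tau> ^^ b) v)"
proof
  assume cong: "cong_mod U ((\<tau> ^^ a) v) ((\<tau> ^^ b) v)"
  have "(\<tau> ^^ a) ((\<tau> ^^ (b - a)) v) = (\<tau> ^^ (a + (b - a))) v" by (simp add: funpow_add)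
  then have "(\<tau> ^^ b) v = (\<tau> ^^ a) ((\<tau> ^^ (b - a)) v)" using ab(1) by simp
  then have "cong_mod U v ((\<tau> ^^ (b - a)) v)"
    using cong cong_mod_funpow_iff[OF U v, of "(\<tau> ^^ (b - a)) v" a] v by simp
  then have "cong_mod U ((\<tau> ^^ (b - a)) v) v" using cong_mod_sym[OF stable_subgroup[OF U]] v by simp
  then show False using no_return ab by simp
qed

text \<open>With \<open>d\<close> the first return of \<open>v\<close> to its coset, the cosets of \<open>(\<tau> ^^ k) v\<close>, \<open>k < d\<close>,
  are pairwise distinct.\<close>
lemma stable_cyclic_extension:
  assumes U: "stable U" and V: "stable V" "U \<subseteq> V" and v: "v \<in> V" "v \<notin> U"
  shows "\<exists>W d. stable W \<and> U \<subseteq> W \<and> W \<subseteq> V \<and> v \<in> W \<and> d > 0 \<and> d * card U \<le> card W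
    \<and> acts_trivially U W d"
proof -
  have sU: "subgroup U G" using U stable_subgroup by blast
  have vc: "v \<in> carrier G" using v stable_subset[OF V(1)] by auto
  define returns where "returns k \<longleftrightarrow> 0 < k \<and> cong_mod U ((\<tau> ^^ k) v) v" for k
  define d where "d = (LEAST k. returns k)"
  have "returns n" using n_pos funpow_n vc cong_mod_refl[OF sU vc] by (simp add: returns_def)
  then have d: "returns d" using LeastI d_def by metis
  have no_return: "\<not> cong_mod U ((\<tau> ^^ k) v) v" if "0 < k" "k < d" for k
    using not_less_Least[of k returns] that d_def returns_def by auto
  define W where "W = orbit_span U v"
  have sW: "stable W" using stable_orbit_span[OF U vc] by (simp add: W_def)
  have "j = i" if ij: "i < d" "j < d" "(\<tau> ^^ j) v \<otimes> inv ((\<tau> ^^ i) v) \<in> U" for i j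
  proof (rule ccontr)
    assume "j \<noteq> i"
    moreover have "cong_mod U ((\<tau> ^^ j) v) ((\<tau> ^^ i) v)" "cong_mod U ((\<tau> ^^ i) v) ((\<tau> ^^ j) v)"
      using ij(3) cong_mod_sym[OF sU] vc by (simp_all add: cong_mod_def)
    ultimately show False
      using not_cong_mod_before_return[OF U vc no_return] ij(1,2) by (metis linorder_neqE_nat)
  qed
  then have "d * card U \<le> card W"
    using card_mult_le_if_distinct_cosets[OF sU stable_subgroup[OF sW], of d "\<lambda>k. (\<tau> ^^ k) v"]
      orbit_span_incl[OF U vc] finite_subset[OF stable_subset[OF sW] finite_carrier]
    unfolding W_def by blast
  moreover have "v \<in> W" using orbit_span_incl(2)[OF U vc, of 0] by (simp add: W_def)
  ultimately show ?thesis
    using sW orbit_span_incl(1)[OF U vc] orbit_span_subset[OF U V v(1)]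
      acts_trivially_orbit_span[OF U vc] d returns_def
    unfolding W_def by blast
qed

text \<open>If \<open>\<tau> ^^ c\<close> is trivial on \<open>W / U\<close> and on \<open>V / W\<close>, then \<open>(\<tau> ^^ c) x = w \<otimes> x\<close> with \<open>w \<in> W\<close>
  and hence \<open>(\<tau> ^^ (c * j)) x \<equiv> w [^] j \<otimes> x\<close> modulo \<open>U\<close>; the exponent \<open>p\<close> kills \<open>w\<close>.\<close>
lemma acts_trivially_mult_p:
  assumes U: "stable U" and W: "stable W" and V: "stable V"
    and UW: "acts_trivially U W c" and WV: "acts_trivially W V c"
  shows "acts_trivially U V (c * p)"
  unfolding acts_trivially_def
proof
  fix x assume x: "x \<in> V"
  have sU: "subgroup U G" and sW: "subgroup W G" using U W stable_subgroup by auto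
  have xc: "x \<in> carrier G" using x stable_subset[OF V] by blast
  define w where "w = (\<tau> ^^ c) x \<otimes> inv x"
  have wW: "w \<in> W" using WV x by (simp add: acts_trivially_def cong_mod_def w_def)
  have wc: "w \<in> carrier G" using wW sW subgroup.subset by blast
  have cx: "(\<tau> ^^ c) x = w \<otimes> x" using xc by (simp add: w_def m_assoc)
  have "cong_mod U ((\<tau> ^^ (c * j)) x) (w [^] j \<otimes> x)" for j
  proof (induction j)
    case 0
    then show ?case using cong_mod_refl[OF sU xc] xc by simp
  next
    case (Suc j)
    have wj: "w [^] j \<in> W" "w [^] j \<in> carrier G" using subgroup_nat_pow_closed[OF sW wW] wc by auto
    have "(\<tau> ^^ (c * Suc j)) x = (\<tau> ^^ c) ((\<tau> ^^ (c * j)) x)" by (simp add: funpow_add)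
    moreover have "(\<tau> ^^ c) (w [^] j \<otimes> x) = (\<tau> ^^ c) (w [^] j) \<otimes> (w \<otimes> x)"
      using funpow_mult wj xc cx by simp
    ultimately have step1: "cong_mod U ((\<tau> ^^ (c * Suc j)) x) ((\<tau> ^^ c) (w [^] j) \<otimes> (w \<otimes> x))"
      using cong_mod_funpow_iff[OF U, of "(\<tau> ^^ (c * j)) x" "w [^] j \<otimes> x" c] Suc.IH xc wj by simp
    have "cong_mod U ((\<tau> ^^ c) (w [^] j) \<otimes> (w \<otimes> x)) (w [^] j \<otimes> (w \<otimes> x))"
      using cong_mod_mult[OF sU _ _ _ _ _ cong_mod_refl[OF sU]] UW wj wc xc
      by (simp add: acts_trivially_def)
    also have "w [^] j \<otimes> (w \<otimes> x) = w [^] Suc j \<otimes> x" using wc xc by (simp add: m_assoc)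
    finally show ?case using cong_mod_trans[OF sU _ _ _ step1] wc xc wj(2) by simp
  qed
  from this[of p] show "cong_mod U ((\<tau> ^^ (c * p)) x) x" using exponent wc xc by simp
qed

text \<open>Induction along a chain of stable subgroups from \<open>U\<close> to \<open>V\<close>: each cyclic layer costs a
  factor \<open>d\<close> with \<open>d * card U \<le> card W\<close>, and \<open>gcd (c * p) n\<close> divides \<open>c\<close> because \<open>n\<close> is
  prime to \<open>p\<close>.\<close>
lemma acts_trivially_bound:
  assumes "stable U" "stable V" "U \<subseteq> V"
  shows "\<exists>k>0. k * card U \<le> card V \<and> acts_trivially U V k"
  using assms
proof (induction "card V - card U" arbitrary: U rule: less_induct)
  case less
  show ?case
  proof (cases "U = V")
    case True
    then have "acts_trivially U V 1"
      using less.prems(1) stable_subgroup[OF less.prems(1)]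
     
        by (auto simp: acts_trivially_def cong_mod_def stable_def subgroup.m_closed
            subgroup.m_inv_closed)
    then show ?thesis using True by (intro exI[of _ 1]) simp
  next
    case False
    then obtain v where v: "v \<in> V" "v \<notin> U" using less.prems(3) by blast
    obtain W a where W: "stable W" "U \<subseteq> W" "W \<subseteq> V" "v \<in> W" "a > 0" "a * card U \<le> card W"
      "acts_trivially U W a"
      using stable_cyclic_extension[OF less.prems v] by blast
    have finV: "finite V" using stable_subset[OF less.prems(2)] finite_carrier finite_subset
      by blast
    have "card U < card W" using psubset_card_mono[OF finite_subset[OF W(3) finV]] W(2,4) v(2)
      by blast
    moreover have "card W \<le> card V" using card_mono[OF finV W(3)] .
    ultimately have "card V - card W < card V - card U" by linarith
    then obtain b where b: "b > 0" "b * card W \<le> card V" "acts_trivially W V b"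
      using less.hyps W(1,3) less.prems(2) by blast
    define c where "c = a * b"
    have "acts_trivially U W c" "acts_trivially W V c"
      using acts_trivially_mult[OF less.prems(1) W(1,7), of b]
        acts_trivially_mult[OF W(1) less.prems(2) b(3), of a]
      by (simp_all add: c_def mult.commute)
    then have "acts_trivially U V (c * p)" using acts_trivially_mult_p less.prems(1,2) W(1) by blast
    moreover have "c > 0" using W(5) b(1) c_def by simp
    ultimately have "acts_trivially U V (gcd (c * p) n)"
      using acts_trivially_gcd[OF less.prems(1,2) _ acts_trivially_n[OF less.prems(1,2)]] p_pos
      by simp
    have "coprime (gcd (c * p) n) p" using coprime_n_p
      by (rule coprime_divisors[OF gcd_dvd2 dvd_refl])
    then have "gcd (c * p) n dvd c" using coprime_dvd_mult_left_iff gcd_dvd1 by blast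
    then have "gcd (c * p) n * card U \<le> c * card U" using \<open>c > 0\<close> dvd_imp_le by simp
    also have "\<dots> = b * (a * card U)" by (simp add: c_def)
    also have "\<dots> \<le> card V" using W(6) b(2) by (meson le_trans mult_le_mono2)
    finally show ?thesis using \<open>acts_trivially U V (gcd (c * p) n)\<close> n_pos
      by (intro exI[of _ "gcd (c * p) n"]) simp
  qed
qed

theorem funpow_eq_id_bound: "\<exists>k>0. k \<le> card (carrier G) \<and> (\<forall>v\<in>carrier G. (\<tau> ^^ k) v = v)"
proof -
  have "stable {\<one>}" "stable (carrier G)"
    using triv_subgroup subgroup_self group_hom.hom_one[OF group_hom_funpow[of 1]]
      funpow_closed[of _ 1] by (auto simp: stable_def)
  then obtain k where "k > 0" "k * card {\<one>} \<le> card (carrier G)" "acts_trivially {\<one>} (carrier G) k"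
    using acts_trivially_bound[of "{\<one>}" "carrier G"] by blast
  moreover have "(\<tau> ^^ k) v = v" if "v \<in> carrier G" "(\<tau> ^^ k) v \<otimes> inv v = \<one>" for v
    using inv_equality[of "(\<tau> ^^ k) v" "inv v"] that by simp
  ultimately show ?thesis by (auto simp: acts_trivially_def cong_mod_def)
qed

end

text \<open>Conjugation by the \<open>p\<close>-regular part \<open>y\<close> of \<open>x\<close> is an automorphism of \<open>P\<close> of order
  prime to \<open>p\<close>, so some power \<open>y [^] k\<close> with \<open>k \<le> card P\<close> centralizes \<open>P\<close>.\<close>
lemma (in group) pow_mem_centralizer_elementary_normal:
  fixes p :: nat
  assumes fin: "finite (carrier G)" and p: "Factorial_Ring.prime p"
    and P: "P \<lhd> G" "comm_group (G\<lparr>carrier := P\<rparr>)" "\<forall>v\<in>P. v [^] p = \<one>"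
    and x: "x \<in> carrier G"
  shows "\<exists>a k. 0 < k \<and> k \<le> card P \<and> (x [^] (p ^ a)) [^] k \<in> centralizer G P"
proof -
  have Pc: "P \<subseteq> carrier G" using normal_imp_subgroup[OF P(1)] subgroup.subset by blast
  have "order G \<noteq> 0" using fin by (simp add: order_gt_0_iff_finite[symmetric])
  moreover have "\<not> is_unit p" using prime_gt_1_nat[OF p] by simp
  ultimately obtain q where q: "order G = p ^ multiplicity p (order G) * q" "\<not> p dvd q"
    using multiplicity_decompose' by blast
  define y where "y = x [^] (p ^ multiplicity p (order G))"
  have y: "y \<in> carrier G" using x y_def by simp
  have "y [^] q = \<one>" using y_def x q(1) pow_order_eq_1[OF x] by (simp add: nat_pow_pow)
  define \<tau> where "\<tau> = (\<lambda>v. y \<otimes> v \<otimes> inv y)"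
  have \<tau>: "(\<tau> ^^ k) v = y [^] k \<otimes> v \<otimes> inv (y [^] k)" if "v \<in> carrier G" for k v
    using funpow_conj[OF y that] \<tau>_def by simp
  interpret P: coprime_automorphism "G\<lparr>carrier := P\<rparr>" \<tau> p q
  proof (intro coprime_automorphism.intro[OF P(2)] coprime_automorphism_axioms.intro)
    show "\<tau> \<in> hom (G\<lparr>carrier := P\<rparr>) (G\<lparr>carrier := P\<rparr>)"
      using normal_invE(2)[OF P(1) y] Pc y
      by (auto intro!: homI simp: \<tau>_def m_assoc subset_iff)
    show "\<And>v. v \<in> carrier (G\<lparr>carrier := P\<rparr>) \<Longrightarrow> v [^]\<^bsub>G\<lparr>carrier := P\<rparr>\<^esub> p = \<one>\<^bsub>G\<lparr>carrier := P\<rparr>\<^esub>"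
      using P(3) by (simp add: nat_pow_consistent[symmetric])
    show "\<And>v. v \<in> carrier (G\<lparr>carrier := P\<rparr>) \<Longrightarrow> (\<tau> ^^ q) v = v"
      using \<tau> \<open>y [^] q = \<one>\<close> Pc by auto
  qed (use P(2) p q fin Pc in \<open>auto simp: prime_gt_0_nat prime_imp_coprime coprime_commute
          finite_subset intro: gr0I\<close>)
  obtain k where k: "k > 0" "k \<le> card P" "\<forall>v\<in>P. (\<tau> ^^ k) v = v"
    using P.funpow_eq_id_bound by auto
  have "y [^] k \<otimes> v = v \<otimes> y [^] k" if "v \<in> P" for v
  proof -
    have "v \<in> carrier G" using that Pc by blast
    then have "y [^] k \<otimes> v \<otimes> inv (y [^] k) = v" using k(3) \<tau>[of v k] that by simp
    then show ?thesis using that Pc y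
      by (metis inv_solve_right m_closed nat_pow_closed subsetD inv_closed)
  qed
  then show ?thesis using k y y_def by (auto simp: centralizer_def nat_pow_pow)
qed

section \<open>Extensions with abelian quotient\<close>

locale abelian_extension = H: group H + Hbar: comm_group Hbar
  for H :: "('a, 'm) monoid_scheme" (structure) and Hbar :: "('c, 'n) monoid_scheme" +
  fixes \<pi> :: "'a \<Rightarrow> 'c"
  assumes pi_hom: "\<pi> \<in> hom H Hbar" and finite_carrier: "finite (carrier H)"
begin

abbreviation K where "K \<equiv> kernel H Hbar \<pi>"

lemma group_hom_pi: "group_hom H Hbar \<pi>"
  by (simp add: group_hom_def group_hom_axioms_def pi_hom H.is_group Hbar.is_group)

lemma normal_kernel: "K \<lhd> H"
  using group_hom.normal_kernel[OF group_hom_pi] .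

lemma kernel_subset: "K \<subseteq> carrier H"
  using normal_imp_subgroup[OF normal_kernel] subgroup.subset by blast

lemma pi_closed: "x \<in> carrier H \<Longrightarrow> \<pi> x \<in> carrier Hbar"
  using pi_hom by (auto simp: hom_def)

lemma inv_mult_mem_kernel:
  "a \<in> carrier H \<Longrightarrow> b \<in> carrier H \<Longrightarrow> \<pi> a = \<pi> b \<Longrightarrow> inv a \<otimes> b \<in> K"
  using group_hom.hom_inv[OF group_hom_pi] group_hom.hom_mult[OF group_hom_pi] pi_closed
  by (simp add: kernel_def)

lemma pi_conj:
  assumes "a \<in> carrier H" "z \<in> carrier H" shows "\<pi> (a \<otimes> z \<otimes> inv a) = \<pi> z"
proof -
  have "\<pi> (a \<otimes> z \<otimes> inv a) = \<pi> a \<otimes>\<^bsub>Hbar\<^esub> \<pi> z \<otimes>\<^bsub>Hbar\<^esub> inv\<^bsub>Hbar\<^esub> \<pi> a"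
    using group_hom.hom_inv[OF group_hom_pi] group_hom.hom_mult[OF group_hom_pi] assms by simp
  also have "\<dots> = \<pi> z \<otimes>\<^bsub>Hbar\<^esub> \<pi> a \<otimes>\<^bsub>Hbar\<^esub> inv\<^bsub>Hbar\<^esub> \<pi> a"
    using Hbar.m_comm[OF pi_closed[OF assms(1)] pi_closed[OF assms(2)]] by simp
  finally show ?thesis using pi_closed assms by (simp add: Hbar.m_assoc)
qed

lemma normal_if_kernel_subset:
  assumes Q: "subgroup Q H" "K \<subseteq> Q" shows "Q \<lhd> H"
proof (rule H.normal_invI[OF Q(1)])
  fix a z assume a: "a \<in> carrier H" and z: "z \<in> Q"
  have zc: "z \<in> carrier H" using z Q subgroup.subset by blast
  then have "inv z \<otimes> (a \<otimes> z \<otimes> inv a) \<in> Q"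
    using inv_mult_mem_kernel[of z "a \<otimes> z \<otimes> inv a"] pi_conj[OF a zc] a Q(2) by auto
  then have "z \<otimes> (inv z \<otimes> (a \<otimes> z \<otimes> inv a)) \<in> Q" using subgroup.m_closed[OF Q(1) z] by blast
  then show "a \<otimes> z \<otimes> inv a \<in> Q" using a zc by simp
qed

lemma nat_pow_mult_mod_kernel:
  assumes "g \<in> carrier H" "h \<in> carrier H"
  shows "inv (g [^] (n::nat) \<otimes> h [^] n) \<otimes> (g \<otimes> h) [^] n \<in> K"
proof -
  have "\<pi> ((g \<otimes> h) [^] n) = \<pi> (g [^] n \<otimes> h [^] n)"
    using group_hom.hom_nat_pow[OF group_hom_pi] group_hom.hom_mult[OF group_hom_pi] assms pi_closed
    by (simp add: Hbar.pow_mult_distrib Hbar.m_comm)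
  then show ?thesis using inv_mult_mem_kernel assms by simp
qed

text \<open>The commutator map \<open>k \<mapsto> inv x \<otimes> (k \<otimes> x \<otimes> inv k)\<close> sends \<open>Q\<close> into \<open>K\<close>, and its fibres are
  left cosets of \<open>Q \<inter> centralizer H {x}\<close>.\<close>
lemma card_le_card_kernel_mult_centralizer:
  assumes Q: "subgroup Q H" and x: "x \<in> carrier H"
  shows "card Q \<le> card K * card (Q \<inter> centralizer H {x})"
proof -
  have Qc: "Q \<subseteq> carrier H" using Q subgroup.subset by blast
  have finQ: "finite Q" using Qc finite_carrier finite_subset by blast
  define \<phi> where "\<phi> k = inv x \<otimes> (k \<otimes> x \<otimes> inv k)" for k
  define C where "C = Q \<inter> centralizer H {x}"
  have fibre: "card {k \<in> Q. \<phi> k = \<phi> k0} \<le> card C" if k0: "k0 \<in> Q" for k0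
  proof -
    have k0c: "k0 \<in> carrier H" using k0 Qc by blast
    have "inj_on (\<lambda>k. inv k0 \<otimes> k) {k \<in> Q. \<phi> k = \<phi> k0}"
      by (intro inj_onI) (use k0c Qc in \<open>auto simp: subset_iff\<close>)
    moreover have "(\<lambda>k. inv k0 \<otimes> k) ` {k \<in> Q. \<phi> k = \<phi> k0} \<subseteq> C"
    proof clarify
      fix k assume k: "k \<in> Q" "\<phi> k = \<phi> k0"
      have kc: "k \<in> carrier H" using k Qc by blast
      have "k \<otimes> x \<otimes> inv k = k0 \<otimes> x \<otimes> inv k0" using k(2) x kc k0c by (simp add: \<phi>_def)
      have "inv k0 \<otimes> k \<otimes> x = inv k0 \<otimes> (k \<otimes> x \<otimes> inv k) \<otimes> k" using x kc k0c by (simp add: H.m_assoc)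
      also have "\<dots> = inv k0 \<otimes> (k0 \<otimes> x \<otimes> inv k0) \<otimes> k" using \<open>k \<otimes> x \<otimes> inv k = _\<close> by simp
      also have "\<dots> = x \<otimes> (inv k0 \<otimes> k)" using x kc k0c by (simp add: H.m_assoc)
      finally have "inv k0 \<otimes> k \<otimes> x = x \<otimes> (inv k0 \<otimes> k)" .
      moreover have "inv k0 \<otimes> k \<in> Q" using k k0 Q subgroup.m_closed subgroup.m_inv_closed by metis
      ultimately show "inv k0 \<otimes> k \<in> C" using Qc by (auto simp: C_def centralizer_def)
    qed
    moreover have "finite C" using C_def finQ by simp
    ultimately show ?thesis using card_inj_on_le by blast
  qed
  have "\<phi> k \<in> K" if "k \<in> Q" for k
    using that Qc inv_mult_mem_kernel[OF x _ pi_conj[of k x, symmetric]] x by (auto simp: \<phi>_def)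
  then have card_image: "card (\<phi> ` Q) \<le> card K"
    using card_mono[OF finite_subset[OF kernel_subset finite_carrier]] by blast
  have "card Q = card (\<Union>u\<in>\<phi> ` Q. {k \<in> Q. \<phi> k = u})" by (rule arg_cong[where f = card]) blast
  also have "\<dots> \<le> (\<Sum>u\<in>\<phi> ` Q. card {k \<in> Q. \<phi> k = u})" by (rule card_UN_le) (simp add: finQ)
  also have "\<dots> \<le> card (\<phi> ` Q) * card C"
    using sum_bounded_above[of "\<phi> ` Q" "\<lambda>u. card {k \<in> Q. \<phi> k = u}" "card C"] fibre by auto
  also have "\<dots> \<le> card K * card C" using card_image by simp
  finally show ?thesis by (simp add: C_def)
qed

lemma card_le_card_kernel_pow_mult_centralizer:
  assumes T: "finite T" "T \<subseteq> carrier H" and Q: "subgroup Q H"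
  shows "card Q \<le> card K ^ card T * card (Q \<inter> centralizer H T)"
  using T
proof (induction T rule: finite_induct)
  case empty
  have "Q \<inter> centralizer H {} = Q" using Q subgroup.subset by (fastforce simp: centralizer_def)
  then show ?case by simp
next
  case (insert t T)
  have "subgroup (Q \<inter> centralizer H T) H"
    using H.subgroups_Inter_pair[OF Q H.subgroup_centralizer] insert by simp
  then have "card (Q \<inter> centralizer H T) \<le> card K * card (Q \<inter> centralizer H T \<inter> centralizer H {t})"
    using card_le_card_kernel_mult_centralizer insert by simp
  moreover have "Q \<inter> centralizer H T \<inter> centralizer H {t} = Q \<inter> centralizer H (insert t T)"
    by (auto simp: centralizer_def)
  ultimately have "card Q \<le> card K ^ card T * (card K * card (Q \<inter> centralizer H (insert t T)))"
    using insert by (metis le_trans mult_le_mono2 insert_subset)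
  then show ?case using insert(1,2) by (simp add: ac_simps)
qed

lemma lift_generators:
  assumes surj: "\<pi> ` carrier H = carrier Hbar" and S: "finite S" "S \<subseteq> carrier Hbar"
    and gen: "generate Hbar S = carrier Hbar"
  shows "\<exists>Xs. finite Xs \<and> Xs \<subseteq> carrier H \<and> card Xs \<le> card S \<and> generate H (K \<union> Xs) = carrier H"
proof -
  have "\<forall>b\<in>carrier Hbar. \<exists>h. h \<in> carrier H \<and> \<pi> h = b" unfolding surj[symmetric] by blast
  from bchoice[OF this] obtain lift
    where lift: "\<forall>b\<in>carrier Hbar. lift b \<in> carrier H \<and> \<pi> (lift b) = b"
    by blast
  define Xs where "Xs = lift ` S"
  have Xs: "Xs \<subseteq> carrier H" using lift S(2) by (auto simp: Xs_def)
  define G0 where "G0 = generate H (K \<union> Xs)"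
  have sG0: "subgroup G0 H" using H.generate_is_subgroup kernel_subset Xs by (simp add: G0_def)
  have KX: "K \<union> Xs \<subseteq> G0" unfolding G0_def by (auto intro: generate.incl)
  have "b \<in> \<pi> ` G0" if "b \<in> S" for b
  proof (rule image_eqI)
    show "b = \<pi> (lift b)" using lift that S(2) by auto
    show "lift b \<in> G0" using KX that by (auto simp: Xs_def)
  qed
  then have "S \<subseteq> \<pi> ` G0" by blast
  then have "generate Hbar S \<subseteq> \<pi> ` G0"
    by (rule Hbar.generate_subgroup_incl[OF _ group_hom.subgroup_img_is_subgroup[OF group_hom_pi sG0]])
  then have "carrier Hbar \<subseteq> \<pi> ` G0" using gen by simp
  have "g \<in> G0" if g: "g \<in> carrier H" for g
  proof -
    have "\<pi> g \<in> \<pi> ` G0" using \<open>carrier Hbar \<subseteq> \<pi> ` G0\<close> pi_closed[OF g] by (rule subsetD)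
    then obtain g' where g': "g' \<in> G0" "\<pi> g' = \<pi> g" by (auto simp: image_iff)
    have g'c: "g' \<in> carrier H" using g' sG0 subgroup.subset by blast
    have "inv g' \<otimes> g \<in> G0" using inv_mult_mem_kernel[OF g'c g g'(2)] KX by blast
    then have "g' \<otimes> (inv g' \<otimes> g) \<in> G0" using g'(1) subgroup.m_closed[OF sG0] by blast
    then show ?thesis using g'c g by simp
  qed
  then have "G0 = carrier H" using sG0 subgroup.subset by blast
  moreover have "finite Xs" "card Xs \<le> card S" using S(1) card_image_le by (simp_all add: Xs_def)
  ultimately show ?thesis using Xs unfolding G0_def by blast
qed

lemma subgroup_pow_prime_power_mem:
  fixes p :: nat
  assumes R: "subgroup R H" "K \<subseteq> R"
  shows "subgroup {g \<in> carrier H. \<exists>j. g [^] (p ^ j) \<in> R} H"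
proof (rule H.subgroupI)
  show "{g \<in> carrier H. \<exists>j. g [^] (p ^ j) \<in> R} \<noteq> {}"
    using subgroup.one_closed[OF R(1)] by force
next
  fix a assume "a \<in> {g \<in> carrier H. \<exists>j. g [^] (p ^ j) \<in> R}"
  then obtain j where a: "a \<in> carrier H" "a [^] (p ^ j) \<in> R" by auto
  then have "inv a [^] (p ^ j) \<in> R" using H.nat_pow_inv subgroup.m_inv_closed[OF R(1)] by metis
  then show "inv a \<in> {g \<in> carrier H. \<exists>j. g [^] (p ^ j) \<in> R}" using a by auto
next
  fix a b
  assume "a \<in> {g \<in> carrier H. \<exists>j. g [^] (p ^ j) \<in> R}" "b \<in> {g \<in> carrier H. \<exists>j. g [^] (p ^ j) \<in> R}"
  then obtain i j where a: "a \<in> carrier H" "a [^] (p ^ i) \<in> R"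
    and b: "b \<in> carrier H" "b [^] (p ^ j) \<in> R"
    by auto
  define m where "m = p ^ (i + j)"
  have "a [^] m = (a [^] (p ^ i)) [^] (p ^ j)" "b [^] m = (b [^] (p ^ j)) [^] (p ^ i)"
    using a b by (simp_all add: m_def H.nat_pow_pow power_add mult.commute)
  then have ab: "a [^] m \<otimes> b [^] m \<in> R"
    using subgroup_nat_pow_closed[OF R(1)] a b subgroup.m_closed[OF R(1)] by metis
  moreover have "inv (a [^] m \<otimes> b [^] m) \<otimes> (a \<otimes> b) [^] m \<in> R"
    using nat_pow_mult_mod_kernel[OF a(1) b(1)] R(2) by blast
  ultimately have "(a [^] m \<otimes> b [^] m) \<otimes> (inv (a [^] m \<otimes> b [^] m) \<otimes> (a \<otimes> b) [^] m) \<in> R"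
    using subgroup.m_closed[OF R(1)] by blast
  then have "(a \<otimes> b) [^] m \<in> R" using a b by simp
  then show "a \<otimes> b \<in> {g \<in> carrier H. \<exists>j. g [^] (p ^ j) \<in> R}" using a b m_def by auto
qed (auto)

lemma pow_prime_power_mem_if_generators:
  fixes p :: nat
  assumes R: "subgroup R H" "K \<subseteq> R" and Xs: "Xs \<subseteq> carrier H" "generate H (K \<union> Xs) = carrier H"
    and pows: "\<forall>x\<in>Xs. \<exists>j. x [^] (p ^ j) \<in> R"
  shows "\<forall>g\<in>carrier H. \<exists>j. g [^] (p ^ j) \<in> R"
proof -
  have "K \<union> Xs \<subseteq> {g \<in> carrier H. \<exists>j. g [^] (p ^ j) \<in> R}"
    using R(2) kernel_subset Xs(1) pows by (force intro: exI[of _ 0])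
  then have "generate H (K \<union> Xs) \<subseteq> {g \<in> carrier H. \<exists>j. g [^] (p ^ j) \<in> R}"
    using H.generate_subgroup_incl subgroup_pow_prime_power_mem[OF R] by blast
  then show ?thesis using Xs(2) by auto
qed

text \<open>Adjoin one generator at a time: a subgroup containing \<open>K\<close> is normal, and multiplying it by the
  cyclic group of \<open>x [^] (p ^ a)\<close> multiplies its order by at most \<open>b\<close>.\<close>
lemma exists_subgroup_pow_prime_power_mem:
  fixes p :: nat
  assumes Xs: "finite Xs" "Xs \<subseteq> carrier H" and M: "subgroup M H" "K \<subseteq> M"
    and pows: "\<forall>x\<in>Xs. \<exists>a k. 0 < k \<and> k \<le> b \<and> (x [^] (p ^ a)) [^] k \<in> M"
  shows "\<exists>R. subgroup R H \<and> M \<subseteq> R \<and> card R \<le> card M * b ^ card Xs \<and> (\<forall>x\<in>Xs. \<exists>j. x [^] (p ^ j) \<in> R)"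
  using Xs pows
proof (induction Xs rule: finite_induct)
  case empty
  then show ?case using M by auto
next
  case (insert x Xs)
  then obtain R where R: "subgroup R H" "M \<subseteq> R" "card R \<le> card M * b ^ card Xs"
    "\<forall>x\<in>Xs. \<exists>j. x [^] (p ^ j) \<in> R"
    by auto
  obtain a k where ak: "0 < k" "k \<le> b" "(x [^] (p ^ a)) [^] k \<in> M" using insert.prems by auto
  define y where "y = x [^] (p ^ a)"
  have y: "y \<in> carrier H" using insert.prems y_def by simp
  define R' where "R' = R <#> generate H {y}"
  have "R \<lhd> H" using normal_if_kernel_subset R(1,2) M(2) by blast
  then have "subgroup R' H" unfolding R'_def by (simp add: H.mult_norm_subgroup H.generate_is_subgroup y)
  moreover have "R \<subseteq> R'" "y \<in> R'"
    using R(1) subgroup.subset[OF R(1)] subgroup.one_closed[OF R(1)] y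
    by (force simp: R'_def set_mult_def intro: generate.one generate.incl)+
  moreover have "card R' \<le> card M * b ^ card (insert x Xs)"
  proof -
    have "card R' \<le> card R * k"
      using H.card_set_mult_cyclic_le[OF finite_carrier R(1) y ak(1)] ak(3) R(2) y_def R'_def
      by blast
    also have "\<dots> \<le> card M * b ^ card Xs * b" using R(3) ak(2) by (rule mult_le_mono)
    finally show ?thesis using insert(1,2) by (simp add: ac_simps)
  qed
  ultimately show ?case using R(2,4) y_def by blast
qed

lemma exists_subgroup_prime_power_index:
  fixes p :: nat
  assumes p: "Factorial_Ring.prime p" and M: "subgroup M H" "K \<subseteq> M"
    and Xs: "finite Xs" "Xs \<subseteq> carrier H" "generate H (K \<union> Xs) = carrier H"
    and pows: "\<forall>x\<in>Xs. \<exists>a k. 0 < k \<and> k \<le> b \<and> (x [^] (p ^ a)) [^] k \<in> M"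
  shows "\<exists>R t. subgroup R H \<and> M \<subseteq> R \<and> card R \<le> card M * b ^ card Xs \<and> order H = p ^ t * card R"
proof -
  obtain R where R: "subgroup R H" "M \<subseteq> R" "card R \<le> card M * b ^ card Xs"
    "\<forall>x\<in>Xs. \<exists>j. x [^] (p ^ j) \<in> R"
    using exists_subgroup_pow_prime_power_mem[OF Xs(1,2) M pows] by blast
  then have "\<forall>g\<in>carrier H. \<exists>j. g [^] (p ^ j) \<in> R"
    using pow_prime_power_mem_if_generators M(2) Xs(2,3) by blast
  then obtain t where "card (carrier H) = p ^ t * card R"
    using H.index_prime_power_if_prime_power_pows[OF finite_carrier p R(1) H.subgroup_self] R(1)
      subgroup.subset
    by blast
  then show ?thesis using R by (auto simp: order_def)
qed

lemma card_centralizer_le: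
  assumes S: "S \<subseteq> carrier H" and T: "finite T" "T \<subseteq> carrier H"
    and gen: "generate H (S \<union> T) = carrier H"
  shows "card (centralizer H S) \<le> card K ^ card T * card (centralizer H (carrier H))"
proof -
  have "centralizer H S \<inter> centralizer H T \<subseteq> centralizer H (carrier H)"
    using H.centralizer_subset_centralizer_generate[of "S \<union> T"] S T(2) gen
    by (auto simp: centralizer_def)
  then have "card (centralizer H S \<inter> centralizer H T) \<le> card (centralizer H (carrier H))"
    using finite_carrier by (intro card_mono) (auto simp: centralizer_def)
  then show ?thesis
    using card_le_card_kernel_pow_mult_centralizer[OF T H.subgroup_centralizer[OF S]]
    by (meson le_trans mult_le_mono2)
qed

lemma subgroup_kernel_set_mult:
  assumes N: "subgroup N H"
  shows "subgroup (K <#> N) H" "K \<subseteq> K <#> N" "N \<subseteq> K <#> N"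
proof -
  show "subgroup (K <#> N) H" using H.mult_norm_subgroup[OF normal_kernel N] .
  have "k \<otimes> \<one> \<in> K <#> N" if "k \<in> K" for k using that subgroup.one_closed[OF N]
    by (auto simp: set_mult_def)
  then show "K \<subseteq> K <#> N" using kernel_subset by (auto simp: subset_iff)
  have "\<one> \<otimes> g \<in> K <#> N" if "g \<in> N" for g
    using that subgroup.one_closed[OF normal_imp_subgroup[OF normal_kernel]]
    by (auto simp: set_mult_def)
  then show "N \<subseteq> K <#> N" using subgroup.subset[OF N] by (auto simp: subset_iff)
qed

text \<open>\<open>R\<close> is obtained from \<open>K <#> centralizer H P\<close> by adjoining the powers of the generators
  that centralize \<open>P\<close>.\<close>
lemma exists_subgroup_prime_power_index_centralizer:
  fixes p :: nat
  assumes p: "Factorial_Ring.prime p"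
    and P: "P \<lhd> H" "comm_group (H\<lparr>carrier := P\<rparr>)" "\<forall>v\<in>P. v [^] p = \<one>"
    and Xs: "finite Xs" "Xs \<subseteq> carrier H" "generate H (K \<union> Xs) = carrier H"
  shows "\<exists>R t. subgroup R H \<and> centralizer H P \<subseteq> R \<and> order H = p ^ t * card R \<and>
    card R \<le> card K * card (centralizer H P) * card P ^ card Xs"
proof -
  define N where "N = centralizer H P"
  have Pc: "P \<subseteq> carrier H" using normal_imp_subgroup[OF P(1)] subgroup.subset by blast
  have sN: "subgroup N H" using H.subgroup_centralizer[OF Pc] by (simp add: N_def)
  note M = subgroup_kernel_set_mult[OF sN]
  have "\<forall>x\<in>Xs. \<exists>a k. 0 < k \<and> k \<le> card P \<and> (x [^] (p ^ a)) [^] k \<in> K <#> N"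
  proof
    fix x assume "x \<in> Xs"
    then have "x \<in> carrier H" using Xs(2) by blast
    then obtain a k where "0 < k" "k \<le> card P" "(x [^] (p ^ a)) [^] k \<in> N"
      using H.pow_mem_centralizer_elementary_normal[OF finite_carrier p P] N_def by blast
    then show "\<exists>a k. 0 < k \<and> k \<le> card P \<and> (x [^] (p ^ a)) [^] k \<in> K <#> N" using M(3) by blast
  qed
  from exists_subgroup_prime_power_index[OF p M(1,2) Xs this]
  obtain R t where R: "subgroup R H" "K <#> N \<subseteq> R" "card R \<le> card (K <#> N) * card P ^ card Xs"
    and t: "order H = p ^ t * card R"
    by blast
  have "card (K <#> N) \<le> card K * card N"
    using H.card_set_mult_le[OF kernel_subset subgroup.subset[OF sN] finite_carrier] .
  then have "card R \<le> card K * card N * card P ^ card Xs" using R(3)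
    by (meson le_trans mult_le_mono1)
  then show ?thesis using R(1,2) M(3) t unfolding N_def by blast
qed

lemma index_central_coprime_torsion_le:
  fixes p :: nat
  assumes p: "Factorial_Ring.prime p"
    and P: "P \<lhd> H" "comm_group (H\<lparr>carrier := P\<rparr>)" "\<forall>v\<in>P. v [^] p = \<one>"
    and Xs: "finite Xs" "Xs \<subseteq> carrier H" "generate H (K \<union> Xs) = carrier H" "card Xs \<le> r"
    and T: "finite T" "T \<subseteq> carrier H" "generate H (P \<union> T) = carrier H" "card T \<le> n"
  shows "\<exists>t. p ^ t dvd order H \<and>
    card (rcosets (central_torsion H (\<lambda>n. coprime n p))) \<le> p ^ t * card P ^ r * card K ^ (n + 1)"
proof -
  define Zp where "Zp = central_torsion H (\<lambda>n. \<exists>j. n = p ^ j)"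
  define A where "A = central_torsion H (\<lambda>n. coprime n p)"
  have Pc: "P \<subseteq> carrier H" using normal_imp_subgroup[OF P(1)] subgroup.subset by blast
  obtain R t where R: "subgroup R H" "centralizer H P \<subseteq> R" "order H = p ^ t * card R"
    "card R \<le> card K * card (centralizer H P) * card P ^ card Xs"
    using exists_subgroup_prime_power_index_centralizer[OF p P Xs(1-3)] by blast
  obtain u where u: "card Zp = p ^ u"
    using H.card_central_prime_power_torsion[OF finite_carrier p] Zp_def by blast
  have "Zp \<subseteq> centralizer H P"
    using H.central_torsion_subset Pc by (auto simp: Zp_def centralizer_def)
  then have "Zp \<subseteq> R" using R(2) by blast
  then have "p ^ u dvd card R"
    using H.card_subgroup_dvd[OF H.subgroup_central_prime_power_torsion[of p] R(1)] u
    by (simp add: Zp_def)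
  then have "p ^ (t + u) dvd order H" using R(3) by (simp add: power_add)
  moreover have "order H \<le> p ^ (t + u) * card P ^ r * card K ^ (n + 1) * card A"
  proof -
    have PX: "card P ^ card Xs \<le> card P ^ r" and KT: "card K ^ card T \<le> card K ^ n"
      using Xs(4) T(4) subgroup.finite_imp_card_positive[OF _ finite_carrier]
        normal_imp_subgroup[OF P(1)]
        normal_imp_subgroup[OF normal_kernel] by (auto intro!: power_increasing simp: Suc_leI)
    have "card (centralizer H P) \<le> card K ^ card T * card (centralizer H (carrier H))"
      using card_centralizer_le[OF Pc T(1-3)] .
    also have "\<dots> \<le> card K ^ n * (p ^ u * card A)"
      using KT H.card_center_le[OF finite_carrier p] u
      by (intro mult_le_mono) (simp_all add: Zp_def A_def)
    finally have C: "card (centralizer H P) \<le> card K ^ n * (p ^ u * card A)" .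
    have "card R \<le> card K * card (centralizer H P) * card P ^ card Xs" by (rule R(4))
    also have "\<dots> \<le> card K * (card K ^ n * (p ^ u * card A)) * card P ^ r"
      by (intro mult_le_mono order_refl C PX)
    finally show ?thesis using R(3) by (simp add: power_add ac_simps)
  qed
  moreover have "subgroup A H" unfolding A_def by (rule H.subgroup_central_torsion) auto
  ultimately show ?thesis using H.card_rcosets_le[OF finite_carrier] unfolding A_def by blast
qed

lemma image_elementary_normal_sylow:
  fixes p :: nat
  assumes i: "group_hom F H i" "inj_on i (carrier F)" "i ` carrier F = K"
    and finF: "finite (carrier F)" and p: "Factorial_Ring.prime p"
    and Fp: "sylow_subgroup F p Fp" "Fp \<lhd> F"
    and elem: "comm_group (F\<lparr>carrier := Fp\<rparr>)" "\<forall>x\<in>Fp. x [^]\<^bsub>F\<^esub> p = \<one>\<^bsub>F\<^esub>"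
  shows "i ` Fp \<lhd> H" "comm_group (H\<lparr>carrier := i ` Fp\<rparr>)" "\<forall>v\<in>i ` Fp. v [^] p = \<one>"
proof -
  interpret i: group_hom F H i by fact
  have F: "group F" using i(1) by (simp add: group_hom_def)
  have sFp: "subgroup Fp F" and Fpc: "Fp \<subseteq> carrier F" and ndvd: "\<not> p dvd order F div card Fp"
    using Fp(1) subgroup.subset by (auto simp: sylow_subgroup_def)
  have sP: "subgroup (i ` Fp) H" using i.subgroup_img_is_subgroup[OF sFp] .
  show exponent: "\<forall>v\<in>i ` Fp. v [^] p = \<one>"
    using elem(2) Fpc by (auto simp flip: i.hom_nat_pow)
  show "comm_group (H\<lparr>carrier := i ` Fp\<rparr>)"
  proof (rule group.group_comm_groupI[OF subgroup.subgroup_is_group[OF sP H.is_group]])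
    fix x y assume "x \<in> carrier (H\<lparr>carrier := i ` Fp\<rparr>)" "y \<in> carrier (H\<lparr>carrier := i ` Fp\<rparr>)"
    then obtain a b where ab: "a \<in> Fp" "b \<in> Fp" "x = i a" "y = i b" by auto
    interpret Fp: comm_group "F\<lparr>carrier := Fp\<rparr>" by (rule elem(1))
    have "a \<otimes>\<^bsub>F\<^esub> b = b \<otimes>\<^bsub>F\<^esub> a" using Fp.m_comm ab by simp
    then have "i (a \<otimes>\<^bsub>F\<^esub> b) = i (b \<otimes>\<^bsub>F\<^esub> a)" by simp
    then show "x \<otimes>\<^bsub>H\<lparr>carrier := i ` Fp\<rparr>\<^esub> y = y \<otimes>\<^bsub>H\<lparr>carrier := i ` Fp\<rparr>\<^esub> x"
      using ab Fpc by (simp add: subset_iff)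
  qed
  show "i ` Fp \<lhd> H"
  proof (rule H.normal_invI[OF sP])
    fix g v assume g: "g \<in> carrier H" and v: "v \<in> i ` Fp"
    have vc: "v \<in> carrier H" using v sP subgroup.subset by blast
    have "g \<otimes> v \<otimes> inv g \<in> K"
      using normal.inv_op_closed2[OF normal_kernel g] v Fpc i(3) by blast
    then obtain y where y: "y \<in> carrier F" "g \<otimes> v \<otimes> inv g = i y" using i(3) by auto
    have "i (y [^]\<^bsub>F\<^esub> p) = i \<one>\<^bsub>F\<^esub>"
      using H.conj_nat_pow[OF g vc, of p] exponent v g y by (simp add: i.hom_nat_pow)
    then have "y [^]\<^bsub>F\<^esub> p = \<one>\<^bsub>F\<^esub>" using inj_onD[OF i(2)] y(1) by simp
    then have "y \<in> Fp" using group.mem_normal_sylow_if_pow_eq_one[OF F finF p Fp(2) ndvd y(1)]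
      by blast
    then show "g \<otimes> v \<otimes> inv g \<in> i ` Fp" using y(2) by simp
  qed
qed

lemma exists_generators:
  assumes i: "group_hom F H i" "i ` carrier F = K" and Fp: "Fp \<subseteq> carrier F"
    and surj: "\<pi> ` carrier H = carrier Hbar"
    and gen_Hbar: "\<exists>S. finite S \<and> S \<subseteq> carrier Hbar \<and> card S \<le> r \<and> generate Hbar S = carrier Hbar"
    and gen_F: "\<exists>S. finite S \<and> S \<subseteq> carrier F \<and> card S \<le> s \<and> generate F (Fp \<union> S) = carrier F"
  obtains Xs T where "finite Xs" "Xs \<subseteq> carrier H" "generate H (K \<union> Xs) = carrier H" "card Xs \<le> r"
    and "finite T" "T \<subseteq> carrier H" "generate H (i ` Fp \<union> T) = carrier H" "card T \<le> r + s"
proof -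
  obtain Xs where Xs: "finite Xs" "Xs \<subseteq> carrier H" "card Xs \<le> r" "generate H (K \<union> Xs) = carrier H"
    using gen_Hbar lift_generators[OF surj] by (meson le_trans)
  obtain SF where SF: "finite SF" "SF \<subseteq> carrier F" "card SF \<le> s" "generate F (Fp \<union> SF) = carrier F"
    using gen_F by blast
  define T where "T = Xs \<union> i ` SF"
  have T: "T \<subseteq> carrier H" using SF(2) Xs(2) group_hom.hom_closed[OF i(1)] by (auto simp: T_def)
  then have c: "i ` Fp \<union> T \<subseteq> carrier H" using Fp group_hom.hom_closed[OF i(1)] by auto
  have "K = generate H (i ` Fp \<union> i ` SF)"
    using group_hom.generate_img[OF i(1), of "Fp \<union> SF"] Fp SF i(2) by (simp add: image_Un)
  also have "\<dots> \<subseteq> generate H (i ` Fp \<union> T)" by (intro H.mono_generate) (auto simp: T_def)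
  finally have "K \<union> Xs \<subseteq> generate H (i ` Fp \<union> T)" by (auto simp: T_def intro: generate.incl)
  then have "generate H (K \<union> Xs) \<subseteq> generate H (i ` Fp \<union> T)"
    by (rule H.generate_subgroup_incl[OF _ H.generate_is_subgroup[OF c]])
  then have "generate H (i ` Fp \<union> T) = carrier H" using Xs(4) H.generate_incl[OF c] by blast
  moreover have "card T \<le> r + s"
    using card_Un_le[of Xs "i ` SF"] card_image_le[OF SF(1), of i] Xs(3) SF(3) by (simp add: T_def)
  moreover have "finite T" using Xs(1) SF(1) by (simp add: T_def)
  ultimately show ?thesis using that Xs T by blast
qed

end

theorem lemma2p12:
  fixes F :: "'a monoid" and H :: "'b monoid" and Hbar :: "'c monoid"
    and i :: "'a \<Rightarrow> 'b" and \<pi> :: "'b \<Rightarrow> 'c"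
    and p m r s :: nat and B e :: real and Fp :: "'a set"
  assumes "Factorial_Ring.prime p"
    and "group F" and "group H" and "group Hbar"
    and "finite (carrier F)" and "finite (carrier H)" and "finite (carrier Hbar)"
    and "i \<in> hom F H" and "inj_on i (carrier F)"
    and "\<pi> \<in> hom H Hbar" and "\<pi> ` carrier H = carrier Hbar"
    and "i ` carrier F = kernel H Hbar \<pi>"
    and "comm_group Hbar"
    and "\<exists>S. finite S \<and> S \<subseteq> carrier Hbar \<and> card S \<le> r \<and> generate Hbar S = carrier Hbar"
    and "sylow_subgroup F p Fp" and "Fp \<lhd> F"
    and "F\<lparr>carrier := Fp\<rparr> \<cong> product_group {..<m} (\<lambda>_. integer_mod_group p)"
    and "B > 0" and "e > 0"
    and "real (order F) \<le> B * real (card Fp) powr e"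
    and "\<exists>S. finite S \<and> S \<subseteq> carrier F \<and> card S \<le> s \<and> generate F (Fp \<union> S) = carrier F"
  shows "\<exists>A. characteristic_subgroup H A \<and> comm_group (H\<lparr>carrier := A\<rparr>) \<and> coprime (card A) p \<and>
           (\<forall>Hp. sylow_subgroup H p Hp \<longrightarrow>
              real (card (rcosets\<^bsub>H\<^esub> A)) \<le> B ^ (r + s + 1) * real (card Hp) powr (e * real (r + s + 1) + real r + 1))"
proof -
  interpret F: group F by fact
  interpret abelian_extension H Hbar \<pi>
    using assms by (simp add: abelian_extension_def abelian_extension_axioms_def)
  have i: "group_hom F H i" using assms by (simp add: group_hom_def group_hom_axioms_def)
  obtain k where sFp: "subgroup Fp F" and k: "card Fp = p ^ k"
    using assms(15) by (auto simp: sylow_subgroup_def)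
  have Fpc: "Fp \<subseteq> carrier F" using sFp subgroup.subset by blast
  note P = image_elementary_normal_sylow[OF i assms(9,12,5,1,15,16)
      elementary_abelian_if_iso_product[OF assms(2) sFp assms(17)]]
  obtain Xs T where Xs: "finite Xs" "Xs \<subseteq> carrier H" "generate H (K \<union> Xs) = carrier H" "card Xs \<le> r"
    and T: "finite T" "T \<subseteq> carrier H" "generate H (i ` Fp \<union> T) = carrier H" "card T \<le> r + s"
    using exists_generators[OF i assms(12) Fpc assms(11,14,21)] by blast
  have cP: "card (i ` Fp) = p ^ k" using card_image[OF inj_on_subset[OF assms(9) Fpc]] k by simp
  have cK: "card K = order F" using card_image[OF assms(9)] assms(12) by (simp add: order_def)
  obtain t where t: "p ^ t dvd order H" and index:
    "card (rcosets\<^bsub>H\<^esub> (central_torsion H (\<lambda>n. coprime n p)))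
      \<le> p ^ t * (p ^ k) ^ r * order F ^ (r + s + 1)"
    using index_central_coprime_torsion_le[OF assms(1) P Xs T] cP cK by auto
  have dvd: "p ^ k dvd order H"
    using H.card_subgroup_dvd[OF normal_imp_subgroup[OF P(1)] H.subgroup_self] cP
      subgroup.subset[OF normal_imp_subgroup[OF P(1)]] by (simp add: order_def)
  have "real (order F) \<le> B * real (p ^ k) powr e" using assms(20) k by simp
  note bound = H.real_le_powr_sylow[OF assms(6,1) _ index t dvd this assms(18,19)]
  show ?thesis
    using H.central_coprime_torsion_properties[OF assms(6,1)] bound by blast
qed

end
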